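(* Let $\mathcal{H}_A,\mathcal{H}_B,\mathcal{H}_C$ be finite-dimensional complex Hilbert spaces and let $|\psi\rangle\in\mathcal{H}_A\otimes\mathcal{H}_B\otimes\mathcal{H}_C$ be a unit vector, with $\rho=|\psi\rangle\langle\psi|$. Let $d_A$ be the rank of the reduced state $\rho_A=\mathrm{Tr}_{BC}\,\rho$, and assume $d_A\ge 2$. Then $$\sqrt{\tfrac{2}{d_A(d_A-1)}}\; N_{A:CB}\;\le\; N_{AC:B}+N_{AB:C},$$ where $N_{A:CB}$, $N_{AC:B}$, $N_{AB:C}$ denote the negativities of $\rho$ with respect to the bipartitions $A|BC$, $AC|B$ and $AB|C$ respectively.
   Context: For a bipartite state $\rho_{XY}$ on $\mathcal{H}_X\otimes\mathcal{H}_Y$, the negativity is $N_{X:Y}=\frac{\|\rho_{XY}^{T_X}\|_1-1}{2}$, where $\rho_{XY}^{T_X}$ is the partial transpose with respect to subsystem $X$ (in any fixed basis) and $\|\sigma\|_1=\mathrm{Tr}\sqrt{\sigma^\dagger\sigma}$ is the trace norm. For a tripartite state, $N_{AC:B}$ means the negativity for the bipartition with $X=AC$ and $Y=B$, and similarly for the others. *)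

theory Defs
  imports "Jordan_Normal_Form.Matrix" "Jordan_Normal_Form.DL_Rank"
begin

definition dagger :: "complex mat \<Rightarrow> complex mat" where
  "dagger A = mat (dim_col A) (dim_row A) (\<lambda>(i,j). cnj (A $$ (j,i)))"

definition psd :: "nat \<Rightarrow> complex mat \<Rightarrow> bool" where
  "psd n S \<longleftrightarrow> S \<in> carrier_mat n n \<and>
     (\<forall>v \<in> carrier_vec n. Im (conjugate v \<bullet> (S *\<^sub>v v)) = 0 \<and> Re (conjugate v \<bullet> (S *\<^sub>v v)) \<ge> 0)"

definition mat_sqrt :: "nat \<Rightarrow> complex mat \<Rightarrow> complex mat" where
  "mat_sqrt n P = (THE S. psd n S \<and> S * S = P)"

definition trace_norm :: "complex mat \<Rightarrow> real" where
  "trace_norm A = (let S = mat_sqrt (dim_col A) (dagger A * A) in Re (\<Sum>i < dim_row S. S $$ (i,i)))"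

text \<open>Tripartite system H_A (x) H_B (x) H_C with dims nA, nB, nC; the basis vector
  |i>|j>|k> has index i*nB*nC + j*nC + k.\<close>
definition idx3 :: "nat \<Rightarrow> nat \<Rightarrow> nat \<Rightarrow> nat \<Rightarrow> nat \<Rightarrow> nat" where
  "idx3 nB nC i j k = i * (nB * nC) + j * nC + k"

definition dec3 :: "nat \<Rightarrow> nat \<Rightarrow> nat \<Rightarrow> nat \<times> nat \<times> nat" where
  "dec3 nB nC x = (x div (nB * nC), (x div nC) mod nB, x mod nC)"

definition proj :: "complex vec \<Rightarrow> complex mat" where
  "proj \<psi> = mat (dim_vec \<psi>) (dim_vec \<psi>) (\<lambda>(x,y). \<psi> $ x * cnj (\<psi> $ y))"

definition reduced_A :: "nat \<Rightarrow> nat \<Rightarrow> nat \<Rightarrow> complex mat \<Rightarrow> complex mat" where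
  "reduced_A nA nB nC \<rho> = mat nA nA (\<lambda>(i,i').
      \<Sum>j<nB. \<Sum>k<nC. \<rho> $$ (idx3 nB nC i j k, idx3 nB nC i' j k))"

definition ptrans3 :: "nat \<Rightarrow> nat \<Rightarrow> nat \<Rightarrow> bool \<Rightarrow> bool \<Rightarrow> bool \<Rightarrow> complex mat \<Rightarrow> complex mat" where
  "ptrans3 nA nB nC tA tB tC \<rho> = mat (nA*nB*nC) (nA*nB*nC) (\<lambda>(x,y).
     (case dec3 nB nC x of (i,j,k) \<Rightarrow> case dec3 nB nC y of (i',j',k') \<Rightarrow>
       \<rho> $$ (idx3 nB nC (if tA then i' else i) (if tB then j' else j) (if tC then k' else k),
             idx3 nB nC (if tA then i else i') (if tB then j else j') (if tC then k else k'))))"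

text \<open>Negativity of the bipartition X:Y where X is the set of flagged subsystems.\<close>
definition negativity3 :: "nat \<Rightarrow> nat \<Rightarrow> nat \<Rightarrow> bool \<Rightarrow> bool \<Rightarrow> bool \<Rightarrow> complex mat \<Rightarrow> real" where
  "negativity3 nA nB nC tA tB tC \<rho> = (trace_norm (ptrans3 nA nB nC tA tB tC \<rho>) - 1) / 2"

end

theory Submission
  imports Defs "Jordan_Normal_Form.Schur_Decomposition"
begin

text \<open>
  Across a cut X|Y, a pure state with coefficient matrix M has reduced state
  rho_X = M M^dagger = sum_i mu_i |u_i><u_i|, and the partial transpose R of |psi><psi|
  satisfies R^dagger R = sum_{i,j} mu_i mu_j |phi_ij><phi_ij| for an orthonormal family
  phi_ij built from the Schmidt vectors. Hence ||R||_1 = (sum_i sqrt mu_i)^2, and with the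
  purity P_X = sum_i mu_i^2 = Tr rho_X^2 elementary inequalities give
  sqrt ((1 - P_X) / 2) <= N_X:Y <= sqrt (m (m - 1) (1 - P_X)) / 2, where m <= rank rho_X is
  the number of the mu_i. For a tripartite pure state, expanding the squared norm of the
  amplitude products psi_ijk psi_i'j'k', antisymmetrised both in the B-indices and in the
  C-indices, gives Tr rho_AC^2 + Tr rho_AB^2 <= 1 + Tr rho_A^2; together with
  sqrt (a + b) <= sqrt a + sqrt b this yields the claim.
\<close>

text \<open>A vector of length n is a function \<open>nat \<Rightarrow> complex\<close>; only its values on {..<n} matter.\<close>

definition qform :: "nat \<Rightarrow> complex mat \<Rightarrow> (nat \<Rightarrow> complex) \<Rightarrow> complex" where
  "qform n S f = (\<Sum>a<n. \<Sum>b<n. cnj (f a) * S$$(a,b) * f b)"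

definition mat_app :: "nat \<Rightarrow> complex mat \<Rightarrow> (nat \<Rightarrow> complex) \<Rightarrow> nat \<Rightarrow> complex" where
  "mat_app n S f a = (\<Sum>b<n. S$$(a,b) * f b)"

definition hermitian :: "nat \<Rightarrow> complex mat \<Rightarrow> bool" where
  "hermitian n H \<longleftrightarrow> (\<forall>a<n. \<forall>b<n. cnj (H$$(a,b)) = H$$(b,a))"

lemma qform_eq_scalar_prod:
  assumes "S \<in> carrier_mat n n"
  shows "conjugate (vec n f) \<bullet> (S *\<^sub>v vec n f) = qform n S f"
  using assms unfolding qform_def scalar_prod_def
  by (auto simp: mult_mat_vec_def scalar_prod_def sum_distrib_left lessThan_atLeast0 intro!: sum.cong)

lemma psdD:
  assumes "psd n S"
  shows "Im (qform n S f) = 0" "Re (qform n S f) \<ge> 0" "S \<in> carrier_mat n n"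
  using assms qform_eq_scalar_prod[of S n f] unfolding psd_def by (metis vec_carrier)+

lemma psdI:
  assumes "H \<in> carrier_mat n n" "\<And>f. Im (qform n H f) = 0" "\<And>f. Re (qform n H f) \<ge> 0"
  shows "psd n H"
  unfolding psd_def
proof (intro conjI ballI)
  fix v :: "complex vec" assume "v \<in> carrier_vec n"
  hence "conjugate v \<bullet> (H *\<^sub>v v) = qform n H (\<lambda>i. v $ i)"
    using qform_eq_scalar_prod[OF assms(1), of "\<lambda>i. v $ i"] by (metis eq_vecI carrier_vecD dim_vec index_vec)
  thus "Im (conjugate v \<bullet> (H *\<^sub>v v)) = 0" "0 \<le> Re (conjugate v \<bullet> (H *\<^sub>v v))" using assms by auto
qed (rule assms(1))

lemma qform_mat_app: "qform n S f = (\<Sum>a<n. cnj (f a) * mat_app n S f a)"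
  unfolding qform_def mat_app_def by (simp add: sum_distrib_left mult.assoc)

lemma qform_unit:
  assumes "i < n"
  shows "qform n H (\<lambda>a. if a = i then 1 else 0) = H$$(i,i)"
proof -
  have "qform n H (\<lambda>a. if a = i then 1 else 0) = (\<Sum>a<n. if a = i then H$$(i,i) else 0)"
    unfolding qform_def by (rule sum.cong, auto simp: if_distrib cong: if_cong)
  thus ?thesis using assms by simp
qed

lemma qform_two_point_support:
  assumes "i < n" "j < n" "i \<noteq> j" "\<And>a. a \<noteq> i \<Longrightarrow> a \<noteq> j \<Longrightarrow> f a = 0"
  shows "qform n S f = cnj (f i) * S$$(i,i) * f i + cnj (f i) * S$$(i,j) * f j
                  + cnj (f j) * S$$(j,i) * f i + cnj (f j) * S$$(j,j) * f j"
proof -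
  have pair: "(\<Sum>b<n. g b) = g i + g j" if "\<And>b. b \<noteq> i \<Longrightarrow> b \<noteq> j \<Longrightarrow> g b = 0" for g :: "nat \<Rightarrow> complex"
  proof -
    have "(\<Sum>b<n. g b) = (\<Sum>b\<in>{i,j}. g b)"
      by (rule sum.mono_neutral_right) (use assms that in auto)
    thus ?thesis using assms by simp
  qed
  have "qform n S f = (\<Sum>a<n. cnj (f a) * S$$(a,i) * f i + cnj (f a) * S$$(a,j) * f j)"
    unfolding qform_def by (intro sum.cong refl pair) (use assms in auto)
  also have "\<dots> = cnj (f i) * S$$(i,i) * f i + cnj (f i) * S$$(i,j) * f j
                  + (cnj (f j) * S$$(j,i) * f i + cnj (f j) * S$$(j,j) * f j)"
    by (rule pair) (use assms in auto)
  finally show ?thesis by (simp add: algebra_simps)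
qed

lemma psd_diag:
  assumes "psd n H" "i < n"
  shows "Im (H$$(i,i)) = 0" "Re (H$$(i,i)) \<ge> 0"
  using psdD(1,2)[OF assms(1), of "\<lambda>a. if a = i then 1 else 0"] qform_unit[OF assms(2)] by auto

lemma psd_cnj_sym:
  assumes "psd n S" "i < n" "j < n"
  shows "S$$(j,i) = cnj (S$$(i,j))"
proof (cases "i = j")
  case True
  with psd_diag(1)[OF assms(1,2)] show ?thesis by (simp add: complex_eq_iff)
next
  case False
  let ?f = "\<lambda>a. if a = i then 1 else if a = j then 1 else (0::complex)"
  let ?g = "\<lambda>a. if a = i then 1 else if a = j then \<i> else (0::complex)"
  have "qform n S ?f = S$$(i,i) + S$$(i,j) + S$$(j,i) + S$$(j,j)"
    using qform_two_point_support[of i n j ?f S] assms False by auto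
  moreover have "qform n S ?g = S$$(i,i) + \<i> * S$$(i,j) - \<i> * S$$(j,i) + S$$(j,j)"
    using qform_two_point_support[of i n j ?g S] assms False by (auto simp: algebra_simps)
  ultimately show ?thesis
    using psdD(1)[OF assms(1), of ?f] psdD(1)[OF assms(1), of ?g] psd_diag(1)[OF assms(1,2)] psd_diag(1)[OF assms(1,3)]
    by (simp add: complex_eq_iff)
qed

lemma psd_hermitian: "psd n H \<Longrightarrow> hermitian n H"
  unfolding hermitian_def by (auto intro: sym psd_cnj_sym)

lemma mat_app_mult:
  assumes "S \<in> carrier_mat n n" "T \<in> carrier_mat n n" "a < n"
  shows "mat_app n (S * T) f a = mat_app n S (mat_app n T f) a"
proof -
  have "mat_app n (S * T) f a = (\<Sum>b<n. (\<Sum>c<n. S$$(a,c) * T$$(c,b)) * f b)"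
    unfolding mat_app_def using assms
    by (intro sum.cong refl, auto simp: scalar_prod_def lessThan_atLeast0)
  also have "\<dots> = (\<Sum>b<n. \<Sum>c<n. S$$(a,c) * T$$(c,b) * f b)" by (simp add: sum_distrib_right)
  also have "\<dots> = (\<Sum>c<n. \<Sum>b<n. S$$(a,c) * T$$(c,b) * f b)" by (rule sum.swap)
  also have "\<dots> = (\<Sum>c<n. S$$(a,c) * (\<Sum>b<n. T$$(c,b) * f b))" by (simp add: sum_distrib_left mult.assoc)
  finally show ?thesis unfolding mat_app_def by simp
qed

lemma mat_app_add_sum:
  "mat_app n S (\<lambda>a. u a + (\<Sum>k\<in>K. c k * v k a)) x = mat_app n S u x + (\<Sum>k\<in>K. c k * mat_app n S (v k) x)"
proof -
  have "(\<Sum>b<n. S$$(x,b) * (\<Sum>k\<in>K. c k * v k b)) = (\<Sum>b<n. \<Sum>k\<in>K. c k * (S$$(x,b) * v k b))"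
    by (simp add: sum_distrib_left algebra_simps)
  also have "\<dots> = (\<Sum>k\<in>K. \<Sum>b<n. c k * (S$$(x,b) * v k b))" by (rule sum.swap)
  also have "\<dots> = (\<Sum>k\<in>K. c k * (\<Sum>b<n. S$$(x,b) * v k b))" by (simp add: sum_distrib_left)
  finally show ?thesis unfolding mat_app_def by (simp add: distrib_left sum.distrib)
qed

lemma mat_app_diff: "mat_app n S (\<lambda>a. u a - v a) x = mat_app n S u x - mat_app n S v x"
  unfolding mat_app_def by (simp add: algebra_simps sum_subtractf)

lemma mat_app_scale: "mat_app n S (\<lambda>a. c * u a) x = c * mat_app n S u x"
  unfolding mat_app_def by (simp add: sum_distrib_left algebra_simps)

lemma hermitian_mat_app_adjoint:
  assumes "hermitian n H"
  shows "(\<Sum>a<n. cnj (v a) * mat_app n H g a) = (\<Sum>a<n. cnj (mat_app n H v a) * g a)"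
proof -
  have "(\<Sum>a<n. cnj (v a) * mat_app n H g a) = (\<Sum>a<n. \<Sum>b<n. cnj (v a) * H$$(a,b) * g b)"
    unfolding mat_app_def by (simp add: sum_distrib_left mult.assoc)
  also have "\<dots> = (\<Sum>b<n. \<Sum>a<n. cnj (v a) * H$$(a,b) * g b)" by (rule sum.swap)
  also have "\<dots> = (\<Sum>b<n. cnj (mat_app n H v b) * g b)"
    unfolding mat_app_def using assms unfolding hermitian_def
    by (intro sum.cong refl, auto simp: sum_distrib_left sum_distrib_right mult.commute intro!: sum.cong)
  finally show ?thesis .
qed

lemma cnj_inner_sum: "(\<Sum>a<n. cnj (g a) * f a) = cnj (\<Sum>a<n. cnj (f a) * g a)"
  by (simp add: mult.commute)

lemma sum_cnj_mult_self: "(\<Sum>a<n. cnj (g a) * g a) = complex_of_real (\<Sum>a<n. (cmod (g a))\<^sup>2)"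
  by (simp add: complex_norm_square mult.commute del: of_real_power)

lemma sum_cmod_sq_eq_0D:
  fixes n :: nat
  assumes "(\<Sum>a<n. (cmod (x a))\<^sup>2) = 0" "a < n"
  shows "x a = 0"
  using assms sum_nonneg_eq_0_iff[of "lessThan n" "\<lambda>a. (cmod (x a))\<^sup>2"] by simp

section \<open>Spectral sums of rank-one projections\<close>

definition orthonormal :: "nat \<Rightarrow> 'k set \<Rightarrow> ('k \<Rightarrow> nat \<Rightarrow> complex) \<Rightarrow> bool" where
  "orthonormal n K w \<longleftrightarrow> (\<forall>k\<in>K. \<forall>l\<in>K. (\<Sum>a<n. cnj (w k a) * w l a) = (if k = l then 1 else 0))"

definition spec_mat :: "nat \<Rightarrow> 'k set \<Rightarrow> ('k \<Rightarrow> complex) \<Rightarrow> ('k \<Rightarrow> nat \<Rightarrow> complex) \<Rightarrow> complex mat" where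
  "spec_mat n K c w = mat n n (\<lambda>(a,b). \<Sum>k\<in>K. c k * w k a * cnj (w k b))"

lemma spec_mat_carrier[simp]: "spec_mat n K c w \<in> carrier_mat n n"
  unfolding spec_mat_def by simp

lemma mat_app_spec_mat:
  assumes "a < n"
  shows "mat_app n (spec_mat n K c w) f a = (\<Sum>k\<in>K. c k * w k a * (\<Sum>b<n. cnj (w k b) * f b))"
proof -
  have "mat_app n (spec_mat n K c w) f a = (\<Sum>b<n. \<Sum>k\<in>K. c k * w k a * (cnj (w k b) * f b))"
    unfolding mat_app_def spec_mat_def using assms by (intro sum.cong refl, simp add: sum_distrib_left sum_distrib_right algebra_simps)
  also have "\<dots> = (\<Sum>k\<in>K. \<Sum>b<n. c k * w k a * (cnj (w k b) * f b))" by (rule sum.swap)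
  finally show ?thesis by (simp add: sum_distrib_left)
qed

lemma mat_app_spec_mat_eigen:
  assumes "a < n" "orthonormal n K w" "l \<in> K" "finite K"
  shows "mat_app n (spec_mat n K c w) (w l) a = c l * w l a"
proof -
  have "mat_app n (spec_mat n K c w) (w l) a = (\<Sum>k\<in>K. c k * w k a * (if k = l then 1 else 0))"
    unfolding mat_app_spec_mat[OF assms(1)] using assms(2,3) unfolding orthonormal_def by simp
  also have "\<dots> = c l * w l a" using assms(3,4) by (simp add: if_distrib cong: if_cong)
  finally show ?thesis .
qed

lemma spec_mat_mult:
  assumes "orthonormal n K w" "finite K"
  shows "spec_mat n K c w * spec_mat n K d w = spec_mat n K (\<lambda>k. c k * d k) w"
proof (rule eq_matI)
  fix a b assume ab: "a < dim_row (spec_mat n K (\<lambda>k. c k * d k) w)" "b < dim_col (spec_mat n K (\<lambda>k. c k * d k) w)"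
  hence a: "a < n" and b: "b < n" unfolding spec_mat_def by auto
  have "(spec_mat n K c w * spec_mat n K d w) $$ (a,b)
     = (\<Sum>e<n. (\<Sum>k\<in>K. c k * w k a * cnj (w k e)) * (\<Sum>l\<in>K. d l * w l e * cnj (w l b)))"
    using a b unfolding spec_mat_def by (simp add: scalar_prod_def lessThan_atLeast0)
  also have "\<dots> = (\<Sum>e<n. \<Sum>k\<in>K. \<Sum>l\<in>K. (c k * w k a * d l * cnj (w l b)) * (cnj (w k e) * w l e))"
    by (simp only: sum_product) (simp add: algebra_simps)
  also have "\<dots> = (\<Sum>k\<in>K. \<Sum>e<n. \<Sum>l\<in>K. (c k * w k a * d l * cnj (w l b)) * (cnj (w k e) * w l e))"
    by (rule sum.swap)
  also have "\<dots> = (\<Sum>k\<in>K. \<Sum>l\<in>K. \<Sum>e<n. (c k * w k a * d l * cnj (w l b)) * (cnj (w k e) * w l e))"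
    by (rule sum.cong[OF refl], rule sum.swap)
  also have "\<dots> = (\<Sum>k\<in>K. \<Sum>l\<in>K. c k * w k a * d l * cnj (w l b) * (\<Sum>e<n. cnj (w k e) * w l e))"
    by (simp add: sum_distrib_left)
  also have "\<dots> = (\<Sum>k\<in>K. \<Sum>l\<in>K. if k = l then c k * w k a * d l * cnj (w l b) else 0)"
    using assms(1) unfolding orthonormal_def by (intro sum.cong refl, auto)
  also have "\<dots> = (\<Sum>k\<in>K. c k * d k * w k a * cnj (w k b))"
    using assms(2) by (simp add: algebra_simps)
  also have "\<dots> = spec_mat n K (\<lambda>k. c k * d k) w $$ (a,b)" unfolding spec_mat_def using a b by simp
  finally show "(spec_mat n K c w * spec_mat n K d w) $$ (a,b) = spec_mat n K (\<lambda>k. c k * d k) w $$ (a,b)" .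
qed (auto simp: spec_mat_def)

lemma qform_spec_mat: "qform n (spec_mat n K c w) f = (\<Sum>k\<in>K. c k * cnj (\<Sum>a<n. cnj (w k a) * f a) * (\<Sum>a<n. cnj (w k a) * f a))"
proof -
  have "qform n (spec_mat n K c w) f = (\<Sum>a<n. cnj (f a) * (\<Sum>k\<in>K. c k * w k a * (\<Sum>b<n. cnj (w k b) * f b)))"
    unfolding qform_mat_app by (intro sum.cong refl, simp add: mat_app_spec_mat)
  also have "\<dots> = (\<Sum>a<n. \<Sum>k\<in>K. (c k * (\<Sum>b<n. cnj (w k b) * f b)) * (cnj (f a) * w k a))"
    by (simp add: sum_distrib_left algebra_simps)
  also have "\<dots> = (\<Sum>k\<in>K. \<Sum>a<n. (c k * (\<Sum>b<n. cnj (w k b) * f b)) * (cnj (f a) * w k a))"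
    by (rule sum.swap)
  also have "\<dots> = (\<Sum>k\<in>K. c k * (\<Sum>a<n. cnj (f a) * w k a) * (\<Sum>b<n. cnj (w k b) * f b))"
    by (simp add: sum_distrib_left algebra_simps)
  also have "\<dots> = (\<Sum>k\<in>K. c k * cnj (\<Sum>a<n. cnj (w k a) * f a) * (\<Sum>a<n. cnj (w k a) * f a))"
    by (simp add: mult.commute)
  finally show ?thesis .
qed

lemma psd_spec_mat:
  assumes "\<And>k. k \<in> K \<Longrightarrow> c k \<ge> 0"
  shows "psd n (spec_mat n K (\<lambda>k. complex_of_real (c k)) w)"
proof (rule psdI)
  fix f
  have "qform n (spec_mat n K (\<lambda>k. complex_of_real (c k)) w) f
      = complex_of_real (\<Sum>k\<in>K. c k * (cmod (\<Sum>a<n. cnj (w k a) * f a))\<^sup>2)"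
    unfolding qform_spec_mat of_real_sum
    by (intro sum.cong refl) (simp add: complex_norm_square mult.commute mult.left_commute del: of_real_power)
  thus "Im (qform n (spec_mat n K (\<lambda>k. complex_of_real (c k)) w) f) = 0"
    "Re (qform n (spec_mat n K (\<lambda>k. complex_of_real (c k)) w) f) \<ge> 0"
    using assms by (auto intro!: sum_nonneg)
qed simp

lemma hermitian_spec_mat: "hermitian n (spec_mat n K (\<lambda>k. complex_of_real (c k)) w)"
  unfolding hermitian_def spec_mat_def by (auto simp: mult.commute mult.left_commute)

lemma trace_spec_mat:
  assumes fin: "finite K" and on: "orthonormal n K w"
  shows "(\<Sum>a<n. spec_mat n K c w $$ (a,a)) = (\<Sum>k\<in>K. c k)"
proof -
  have "(\<Sum>a<n. spec_mat n K c w $$ (a,a)) = (\<Sum>a<n. \<Sum>k\<in>K. c k * (cnj (w k a) * w k a))"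
    unfolding spec_mat_def by (intro sum.cong refl, simp add: algebra_simps)
  also have "\<dots> = (\<Sum>k\<in>K. \<Sum>a<n. c k * (cnj (w k a) * w k a))" by (rule sum.swap)
  also have "\<dots> = (\<Sum>k\<in>K. c k)" using on unfolding orthonormal_def by (simp add: sum_distrib_left[symmetric])
  finally show ?thesis .
qed

lemma orthonormal_projection_residual:
  assumes fin: "finite K" and on: "orthonormal n K w"
  shows "(\<Sum>a<n. (cmod (f a - (\<Sum>k\<in>K. w k a * (\<Sum>b<n. cnj (w k b) * f b))))\<^sup>2)
       = (\<Sum>a<n. (cmod (f a))\<^sup>2) - (\<Sum>k\<in>K. (cmod (\<Sum>a<n. cnj (w k a) * f a))\<^sup>2)"
proof -
  let ?P = "spec_mat n K (\<lambda>k. 1) w"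
  define g where "g = (\<lambda>a. f a - mat_app n ?P f a)"
  have g_eq: "g a = f a - (\<Sum>k\<in>K. w k a * (\<Sum>b<n. cnj (w k b) * f b))" if "a < n" for a
    unfolding g_def mat_app_spec_mat[OF that] by simp
  have hP: "hermitian n ?P" using hermitian_spec_mat[of n K "\<lambda>k. 1" w] by simp
  have PP: "?P * ?P = ?P" using spec_mat_mult[OF on fin, of "\<lambda>k. 1" "\<lambda>k. 1"] by simp
  have PPf: "mat_app n ?P (mat_app n ?P f) a = mat_app n ?P f a" if "a < n" for a
    using mat_app_mult[of ?P n ?P a f] that PP by simp
  have qP: "qform n ?P f = complex_of_real (\<Sum>k\<in>K. (cmod (\<Sum>a<n. cnj (w k a) * f a))\<^sup>2)"
    unfolding qform_spec_mat of_real_sum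
    by (intro sum.cong refl, simp add: complex_norm_square mult.commute del: of_real_power)
  have "complex_of_real (\<Sum>a<n. (cmod (g a))\<^sup>2) = (\<Sum>a<n. cnj (g a) * g a)" by (simp add: sum_cnj_mult_self)
  also have "\<dots> = (\<Sum>a<n. cnj (f a) * f a) - (\<Sum>a<n. cnj (f a) * mat_app n ?P f a)
      - (\<Sum>a<n. cnj (mat_app n ?P f a) * f a) + (\<Sum>a<n. cnj (mat_app n ?P f a) * mat_app n ?P f a)"
    unfolding g_def by (simp add: algebra_simps sum.distrib sum_subtractf)
  also have "(\<Sum>a<n. cnj (mat_app n ?P f a) * f a) = (\<Sum>a<n. cnj (f a) * mat_app n ?P f a)"
    using hermitian_mat_app_adjoint[OF hP, of f f] by simp
  also have "(\<Sum>a<n. cnj (mat_app n ?P f a) * mat_app n ?P f a) = (\<Sum>a<n. cnj (f a) * mat_app n ?P (mat_app n ?P f) a)"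
    using hermitian_mat_app_adjoint[OF hP, of f "mat_app n ?P f"] by simp
  also have "\<dots> = (\<Sum>a<n. cnj (f a) * mat_app n ?P f a)" by (intro sum.cong refl, simp add: PPf)
  finally have "complex_of_real (\<Sum>a<n. (cmod (g a))\<^sup>2) = (\<Sum>a<n. cnj (f a) * f a) - qform n ?P f"
    unfolding qform_mat_app by simp
  also have "\<dots> = complex_of_real ((\<Sum>a<n. (cmod (f a))\<^sup>2) - (\<Sum>k\<in>K. (cmod (\<Sum>a<n. cnj (w k a) * f a))\<^sup>2))"
    unfolding qP sum_cnj_mult_self by simp
  finally have "(\<Sum>a<n. (cmod (g a))\<^sup>2)
      = (\<Sum>a<n. (cmod (f a))\<^sup>2) - (\<Sum>k\<in>K. (cmod (\<Sum>a<n. cnj (w k a) * f a))\<^sup>2)"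
    by (simp only: of_real_eq_iff)
  moreover have "(\<Sum>a<n. (cmod (g a))\<^sup>2)
      = (\<Sum>a<n. (cmod (f a - (\<Sum>k\<in>K. w k a * (\<Sum>b<n. cnj (w k b) * f b))))\<^sup>2)"
    by (intro sum.cong refl) (simp add: g_eq)
  ultimately show ?thesis by simp
qed

lemma orthonormal_residual_orthogonal:
  assumes fin: "finite K" and on: "orthonormal n K w" and l: "l \<in> K"
  shows "(\<Sum>a<n. cnj (w l a) * (f a - (\<Sum>k\<in>K. w k a * (\<Sum>b<n. cnj (w k b) * f b)))) = 0"
proof -
  have "(\<Sum>a<n. cnj (w l a) * (\<Sum>k\<in>K. w k a * (\<Sum>b<n. cnj (w k b) * f b)))
      = (\<Sum>a<n. \<Sum>k\<in>K. (\<Sum>b<n. cnj (w k b) * f b) * (cnj (w l a) * w k a))"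
    by (simp add: sum_distrib_left algebra_simps)
  also have "\<dots> = (\<Sum>k\<in>K. \<Sum>a<n. (\<Sum>b<n. cnj (w k b) * f b) * (cnj (w l a) * w k a))"
    by (rule sum.swap)
  also have "\<dots> = (\<Sum>k\<in>K. (\<Sum>b<n. cnj (w k b) * f b) * (if l = k then 1 else 0))"
    using on l unfolding orthonormal_def by (simp add: sum_distrib_left[symmetric])
  also have "\<dots> = (\<Sum>b<n. cnj (w l b) * f b)" using l fin by (simp add: if_distrib cong: if_cong)
  finally show ?thesis by (simp add: right_diff_distrib sum_subtractf)
qed

lemma bessel_inequality:
  assumes "finite K" "orthonormal n K w"
  shows "(\<Sum>k\<in>K. (cmod (\<Sum>a<n. cnj (w k a) * f a))\<^sup>2) \<le> (\<Sum>a<n. (cmod (f a))\<^sup>2)"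
proof -
  have "0 \<le> (\<Sum>a<n. (cmod (f a - (\<Sum>k\<in>K. w k a * (\<Sum>b<n. cnj (w k b) * f b))))\<^sup>2)"
    by (intro sum_nonneg) simp
  thus ?thesis unfolding orthonormal_projection_residual[OF assms] by simp
qed

lemma orthonormal_norm:
  assumes "orthonormal n K w" "k \<in> K"
  shows "(\<Sum>a<n. (cmod (w k a))\<^sup>2) = 1"
proof -
  have "complex_of_real (\<Sum>a<n. (cmod (w k a))\<^sup>2) = 1"
    using assms unfolding orthonormal_def sum_cnj_mult_self[symmetric] by auto
  thus ?thesis using of_real_eq_1_iff by blast
qed

lemma card_orthonormal_le:
  fixes n :: nat
  assumes fin: "finite K" and on: "orthonormal n K w"
  shows "card K \<le> n"
proof -
  have "real (card K) = (\<Sum>k\<in>K. \<Sum>a<n. (cmod (w k a))\<^sup>2)"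
    using orthonormal_norm[OF on] by simp
  also have "\<dots> = (\<Sum>a<n. \<Sum>k\<in>K. (cmod (w k a))\<^sup>2)" by (rule sum.swap)
  also have "\<dots> \<le> (\<Sum>a<n. 1)"
  proof (rule sum_mono)
    fix a assume a: "a \<in> {..<n}"
    let ?e = "\<lambda>b. if b = a then (1::complex) else 0"
    have "(\<Sum>k\<in>K. (cmod (w k a))\<^sup>2) = (\<Sum>k\<in>K. (cmod (\<Sum>b<n. cnj (w k b) * ?e b))\<^sup>2)"
      using a by (intro sum.cong refl, simp add: if_distrib cong: if_cong)
    also have "\<dots> \<le> (\<Sum>b<n. (cmod (?e b))\<^sup>2)" by (rule bessel_inequality[OF fin on])
    also have "\<dots> = (\<Sum>b<n. if b = a then 1 else 0)" by (intro sum.cong refl) auto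
    also have "\<dots> = 1" using a by simp
    finally show "(\<Sum>k\<in>K. (cmod (w k a))\<^sup>2) \<le> 1" .
  qed
  also have "\<dots> = real n" by simp
  finally show ?thesis by simp
qed

text \<open>If S is psd and S^2 w = lam w, then x = S w - sqrt lam w satisfies S x = - sqrt lam x,
  which positivity of S only allows for x = 0.\<close>

lemma psd_mat_app_sqrt_eigen:
  assumes S: "psd n S" and lam: "lam > 0" and a: "a < n"
    and sq: "\<And>b. b < n \<Longrightarrow> mat_app n S (mat_app n S w) b = complex_of_real lam * w b"
  shows "mat_app n S w a = complex_of_real (sqrt lam) * w a"
proof -
  define t where "t = complex_of_real (sqrt lam)"
  have tt: "t * t = complex_of_real lam" unfolding t_def using lam by (simp flip: of_real_mult)
  define x where "x = (\<lambda>a. mat_app n S w a - t * w a)"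
  have Sx: "mat_app n S x b = - t * x b" if b: "b < n" for b
  proof -
    have "mat_app n S x b = complex_of_real lam * w b - t * mat_app n S w b"
      unfolding x_def mat_app_diff mat_app_scale sq[OF b] ..
    also have "\<dots> = - t * x b" unfolding x_def tt[symmetric] by (simp add: algebra_simps)
    finally show ?thesis .
  qed
  have "qform n S x = (\<Sum>b<n. cnj (x b) * (- t * x b))"
    unfolding qform_mat_app by (intro sum.cong refl) (simp add: Sx)
  also have "\<dots> = - t * complex_of_real (\<Sum>b<n. (cmod (x b))\<^sup>2)"
    unfolding sum_cnj_mult_self[symmetric] by (simp add: sum_distrib_left algebra_simps)
  finally have "Re (qform n S x) = - sqrt lam * (\<Sum>b<n. (cmod (x b))\<^sup>2)"
    unfolding t_def by simp
  with psdD(2)[OF S, of x] lam have "(\<Sum>b<n. (cmod (x b))\<^sup>2) \<le> 0"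
    by (simp add: mult_le_0_iff)
  hence "(\<Sum>b<n. (cmod (x b))\<^sup>2) = 0" by (simp add: sum_nonneg eq_iff)
  hence "x a = 0" by (rule sum_cmod_sq_eq_0D[OF _ a])
  thus ?thesis unfolding x_def t_def by simp
qed

lemma psd_mat_app_sq_eq_0:
  assumes S: "psd n S" and a: "a < n"
    and sq: "\<And>b. b < n \<Longrightarrow> mat_app n S (mat_app n S r) b = 0"
  shows "mat_app n S r a = 0"
proof -
  have "complex_of_real (\<Sum>b<n. (cmod (mat_app n S r b))\<^sup>2) = (\<Sum>b<n. cnj (mat_app n S r b) * mat_app n S r b)"
    by (rule sum_cnj_mult_self[symmetric])
  also have "\<dots> = (\<Sum>b<n. cnj (r b) * mat_app n S (mat_app n S r) b)"
    by (rule hermitian_mat_app_adjoint[OF psd_hermitian[OF S], symmetric])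
  also have "\<dots> = 0" by (simp add: sq)
  finally show ?thesis by (intro sum_cmod_sq_eq_0D[OF _ a]) (simp only: of_real_eq_0_iff)
qed

lemma psd_sqrt_spec_mat_unique:
  assumes fin: "finite K" and on: "orthonormal n K w" and lam: "\<And>k. k \<in> K \<Longrightarrow> lam k > 0"
    and S: "psd n S" and SS: "S * S = spec_mat n K (\<lambda>k. complex_of_real (lam k)) w"
  shows "S = spec_mat n K (\<lambda>k. complex_of_real (sqrt (lam k))) w"
proof (rule eq_matI)
  let ?Q = "spec_mat n K (\<lambda>k. complex_of_real (lam k)) w"
  have Sc: "S \<in> carrier_mat n n" using psdD(3)[OF S] .
  have SSQ: "mat_app n S (mat_app n S f) a = mat_app n ?Q f a" if "a < n" for f a
    using mat_app_mult[OF Sc Sc that] SS by simp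
  fix a b assume "a < dim_row (spec_mat n K (\<lambda>k. complex_of_real (sqrt (lam k))) w)"
    "b < dim_col (spec_mat n K (\<lambda>k. complex_of_real (sqrt (lam k))) w)"
  hence a: "a < n" and b: "b < n" by (auto simp: spec_mat_def)
  txt \<open>Split the unit vector e at b into its components along the w k and a remainder r.\<close>
  define e where "e = (\<lambda>c. if c = b then 1 else (0::complex))"
  have e_coef: "(\<Sum>c<n. cnj (w k c) * e c) = cnj (w k b)" for k
    unfolding e_def using b by (simp add: if_distrib cong: if_cong)
  define r where "r = (\<lambda>c. e c - (\<Sum>k\<in>K. w k c * (\<Sum>c'<n. cnj (w k c') * e c')))"
  have r_perp: "(\<Sum>c<n. cnj (w l c) * r c) = 0" if "l \<in> K" for l
    unfolding r_def by (rule orthonormal_residual_orthogonal[OF fin on that])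
  have "S$$(a,b) = mat_app n S e a" unfolding mat_app_def e_def using b
    by (simp add: if_distrib cong: if_cong)
  also have "e = (\<lambda>c. r c + (\<Sum>k\<in>K. cnj (w k b) * w k c))" unfolding r_def e_coef by (simp add: mult.commute)
  also have "mat_app n S \<dots> a = mat_app n S r a + (\<Sum>k\<in>K. cnj (w k b) * mat_app n S (w k) a)"
    by (rule mat_app_add_sum)
  also have "mat_app n S r a = 0"
    by (rule psd_mat_app_sq_eq_0[OF S a]) (simp add: SSQ mat_app_spec_mat r_perp)
  also have "(\<Sum>k\<in>K. cnj (w k b) * mat_app n S (w k) a)
      = (\<Sum>k\<in>K. cnj (w k b) * (complex_of_real (sqrt (lam k)) * w k a))"
    by (intro sum.cong refl arg_cong2[where f="(*)"] psd_mat_app_sqrt_eigen[OF S lam a])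
       (simp_all add: SSQ mat_app_spec_mat_eigen[OF _ on _ fin])
  finally show "S$$(a,b) = spec_mat n K (\<lambda>k. complex_of_real (sqrt (lam k))) w $$ (a,b)"
    unfolding spec_mat_def using a b by (simp add: algebra_simps)
qed (use psdD(3)[OF S] in \<open>auto simp: spec_mat_def\<close>)

lemma mat_sqrt_spec_mat:
  assumes fin: "finite K" and on: "orthonormal n K w" and lam: "\<And>k. k \<in> K \<Longrightarrow> lam k > 0"
  shows "mat_sqrt n (spec_mat n K (\<lambda>k. complex_of_real (lam k)) w)
       = spec_mat n K (\<lambda>k. complex_of_real (sqrt (lam k))) w"
  unfolding mat_sqrt_def
proof (rule the_equality)
  let ?R = "spec_mat n K (\<lambda>k. complex_of_real (sqrt (lam k))) w"
  have "?R * ?R = spec_mat n K (\<lambda>k. complex_of_real (sqrt (lam k)) * complex_of_real (sqrt (lam k))) w"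
    by (rule spec_mat_mult[OF on fin])
  also have "\<dots> = spec_mat n K (\<lambda>k. complex_of_real (lam k)) w"
    unfolding spec_mat_def using lam by (intro cong_mat refl) (simp add: less_imp_le flip: of_real_mult)
  finally show "psd n ?R \<and> ?R * ?R = spec_mat n K (\<lambda>k. complex_of_real (lam k)) w"
    using psd_spec_mat[of K "\<lambda>k. sqrt (lam k)"] lam by (simp add: less_imp_le)
next
  fix S assume "psd n S \<and> S * S = spec_mat n K (\<lambda>k. complex_of_real (lam k)) w"
  thus "S = spec_mat n K (\<lambda>k. complex_of_real (sqrt (lam k))) w"
    using psd_sqrt_spec_mat_unique[OF fin on lam, where S=S] by simp
qed

lemma trace_norm_spec_mat:
  assumes fin: "finite K" and on: "orthonormal n K w" and lam: "\<And>k. k \<in> K \<Longrightarrow> lam k > 0"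
    and P: "dim_col P = n" and PP: "dagger P * P = spec_mat n K (\<lambda>k. complex_of_real (lam k)) w"
  shows "trace_norm P = (\<Sum>k\<in>K. sqrt (lam k))"
proof -
  have "mat_sqrt (dim_col P) (dagger P * P) = spec_mat n K (\<lambda>k. complex_of_real (sqrt (lam k))) w"
    unfolding P PP by (rule mat_sqrt_spec_mat[OF fin on lam])
  hence "trace_norm P = Re (\<Sum>a<n. spec_mat n K (\<lambda>k. complex_of_real (sqrt (lam k))) w $$ (a,a))"
    unfolding trace_norm_def Let_def by (simp add: spec_mat_def)
  also have "\<dots> = (\<Sum>k\<in>K. sqrt (lam k))" unfolding trace_spec_mat[OF fin on] by simp
  finally show ?thesis .
qed

section \<open>Spectral decomposition of positive semidefinite matrices\<close>

lemma index_mult_mat_sum: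
  assumes "A \<in> carrier_mat n m" "B \<in> carrier_mat m p" "i < n" "j < p"
  shows "(A * B) $$ (i,j) = (\<Sum>k<m. A$$(i,k) * B$$(k,j))"
  using assms by (simp add: scalar_prod_def lessThan_atLeast0)

lemma trace_similar_mat:
  fixes A :: "complex mat"
  assumes sim: "similar_mat_wit A B P Q" and A: "A \<in> carrier_mat n n"
  shows "(\<Sum>i<n. A$$(i,i)) = (\<Sum>i<n. B$$(i,i))"
proof -
  from sim A have B: "B \<in> carrier_mat n n" and P: "P \<in> carrier_mat n n" and Q: "Q \<in> carrier_mat n n"
    and QP: "Q * P = 1\<^sub>m n" and AE: "A = P * B * Q"
    unfolding similar_mat_wit_def Let_def by auto
  have "(\<Sum>i<n. A$$(i,i)) = (\<Sum>i<n. \<Sum>k<n. (\<Sum>j<n. P$$(i,j) * B$$(j,k)) * Q$$(k,i))"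
  proof (intro sum.cong refl)
    fix i assume i: "i \<in> {..<n}"
    have PB: "P * B \<in> carrier_mat n n" using P B by simp
    show "A$$(i,i) = (\<Sum>k<n. (\<Sum>j<n. P$$(i,j) * B$$(j,k)) * Q$$(k,i))"
    proof -
      have "A$$(i,i) = (\<Sum>k<n. (P * B)$$(i,k) * Q$$(k,i))" unfolding AE using i by (intro index_mult_mat_sum[OF PB Q]) auto
      also have "\<dots> = (\<Sum>k<n. (\<Sum>j<n. P$$(i,j) * B$$(j,k)) * Q$$(k,i))"
        using i by (intro sum.cong refl, subst index_mult_mat_sum[OF P B], auto)
      finally show ?thesis .
    qed
  qed
  also have "\<dots> = (\<Sum>i<n. \<Sum>k<n. \<Sum>j<n. P$$(i,j) * B$$(j,k) * Q$$(k,i))"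
    by (simp add: sum_distrib_right)
  also have "\<dots> = (\<Sum>i<n. \<Sum>k<n. \<Sum>j<n. B$$(j,k) * (Q$$(k,i) * P$$(i,j)))"
    by (rule sum.cong[OF refl])+ (simp add: ac_simps)
  also have "\<dots> = (\<Sum>k<n. \<Sum>i<n. \<Sum>j<n. B$$(j,k) * (Q$$(k,i) * P$$(i,j)))" by (rule sum.swap)
  also have "\<dots> = (\<Sum>k<n. \<Sum>j<n. \<Sum>i<n. B$$(j,k) * (Q$$(k,i) * P$$(i,j)))" by (rule sum.cong[OF refl], rule sum.swap)
  also have "\<dots> = (\<Sum>k<n. \<Sum>j<n. B$$(j,k) * (Q * P)$$(k,j))"
    using P Q by (intro sum.cong refl, simp add: scalar_prod_def lessThan_atLeast0 sum_distrib_left)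
  also have "\<dots> = (\<Sum>k<n. \<Sum>j<n. if j = k then B$$(j,k) else 0)"
    unfolding QP by (intro sum.cong refl, auto)
  also have "\<dots> = (\<Sum>k<n. B$$(k,k))" by simp
  finally show ?thesis .
qed

lemma psd_eq_0_if_diag_0:
  assumes H: "psd n H" and d: "\<And>i. i < n \<Longrightarrow> H$$(i,i) = 0" and a: "a < n" and b: "b < n"
  shows "H$$(a,b) = 0"
proof (cases "a = b")
  case True thus ?thesis using d a by simp
next
  case False
  let ?c = "- H$$(a,b)"
  let ?f = "\<lambda>x. if x = a then ?c else if x = b then 1 else 0"
  have hr: "H$$(b,a) = cnj (H$$(a,b))" using psd_cnj_sym[OF H a b] .
  have "qform n H ?f = cnj ?c * H$$(a,b) + H$$(b,a) * ?c"
    using qform_two_point_support[of a n b ?f H] a b False d[OF a] d[OF b] by simp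
  also have "\<dots> = - complex_of_real (2 * (cmod (H$$(a,b)))\<^sup>2)"
    unfolding hr by (simp add: complex_norm_square algebra_simps del: of_real_power)
  finally have "Re (qform n H ?f) = - 2 * (cmod (H$$(a,b)))\<^sup>2" by simp
  with psdD(2)[OF H, of ?f] have "(cmod (H$$(a,b)))\<^sup>2 \<le> 0" by simp
  thus ?thesis by simp
qed

lemma psd_eq_0_if_trace_0:
  assumes H: "psd n H" and t: "(\<Sum>i<n. H$$(i,i)) = 0" and a: "a < n" and b: "b < n"
  shows "H$$(a,b) = 0"
proof (rule psd_eq_0_if_diag_0[OF H _ a b])
  fix i assume i: "i < n"
  have "(\<Sum>i<n. Re (H$$(i,i))) = 0" using arg_cong[OF t, of Re] by (simp add: Re_sum)
  hence "\<forall>i\<in>{..<n}. Re (H$$(i,i)) = 0" using psd_diag(2)[OF H]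
    by (subst (asm) sum_nonneg_eq_0_iff) auto
  with psd_diag(1)[OF H i] i show "H$$(i,i) = 0" by (simp add: complex_eq_iff)
qed

lemma psd_nonzero_eigenvalue:
  assumes H: "psd n H" and nz: "a0 < n" "b0 < n" "H$$(a0,b0) \<noteq> 0"
  shows "\<exists>e. e \<noteq> 0 \<and> eigenvalue H e"
proof -
  have Hc: "H \<in> carrier_mat n n" using psdD(3)[OF H] .
  obtain es where cp: "char_poly H = (\<Prod>e\<leftarrow>es. [:- e, 1:])"
    using char_poly_factorized[OF Hc] by blast
  obtain B P Q where sd: "schur_decomposition H es = (B,P,Q)" by (metis prod_cases3)
  from schur_decomposition[OF Hc cp sd] have sim: "similar_mat_wit H B P Q" and dg: "diag_mat B = es" by auto
  from sim Hc have Bc: "B \<in> carrier_mat n n" unfolding similar_mat_wit_def Let_def by auto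
  have "sum_list es = sum_list (map (\<lambda>i. B$$(i,i)) [0..<n])" using dg Bc unfolding diag_mat_def by auto
  also have "\<dots> = (\<Sum>i<n. B$$(i,i))" by (simp add: sum_list_distinct_conv_sum_set lessThan_atLeast0)
  also have "\<dots> = (\<Sum>i<n. H$$(i,i))" using trace_similar_mat[OF sim Hc] by simp
  also have "\<dots> \<noteq> 0" using psd_eq_0_if_trace_0[OF H _ nz(1,2)] nz(3) by blast
  finally have "\<exists>e\<in>set es. e \<noteq> 0" by (induction es) auto
  then obtain e where e: "e \<in> set es" "e \<noteq> 0" by blast
  have "poly (char_poly H) e = 0" unfolding cp using e(1)
    by (simp add: poly_prod_list prod_list_zero_iff)
  thus ?thesis using eigenvalue_root_char_poly[OF Hc] e(2) by blast
qed

lemma eigenvector_mat_app: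
  assumes Hc: "H \<in> carrier_mat n n" and ev: "eigenvector H v e"
  shows "\<And>a. a < n \<Longrightarrow> mat_app n H (\<lambda>a. v $ a) a = e * v $ a" and "(\<Sum>a<n. (cmod (v $ a))\<^sup>2) > 0"
proof -
  have vc: "v \<in> carrier_vec n" and v0: "v \<noteq> 0\<^sub>v n" and Hv: "H *\<^sub>v v = e \<cdot>\<^sub>v v"
    using ev Hc unfolding eigenvector_def by auto
  show "mat_app n H (\<lambda>a. v $ a) a = e * v $ a" if a: "a < n" for a
  proof -
    have "mat_app n H (\<lambda>a. v $ a) a = (H *\<^sub>v v) $ a" unfolding mat_app_def using a Hc vc
      by (simp add: scalar_prod_def lessThan_atLeast0 mult.commute)
    thus ?thesis unfolding Hv using a vc by simp
  qed
  obtain a where a: "a < n" "v $ a \<noteq> 0"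
    using v0 vc by (metis eq_vecI carrier_vecD index_zero_vec(1,2))
  have "(cmod (v $ a))\<^sup>2 \<le> (\<Sum>a<n. (cmod (v $ a))\<^sup>2)"
    by (rule member_le_sum) (use a in auto)
  moreover have "(cmod (v $ a))\<^sup>2 > 0" using a by simp
  ultimately show "(\<Sum>a<n. (cmod (v $ a))\<^sup>2) > 0" by linarith
qed

lemma psd_pos_eigenvector:
  assumes H: "psd n H" and nz: "a0 < n" "b0 < n" "H$$(a0,b0) \<noteq> 0"
  shows "\<exists>v \<mu>. \<mu> > 0 \<and> (\<Sum>a<n. (cmod (v a))\<^sup>2) = 1 \<and> (\<forall>a<n. mat_app n H v a = complex_of_real \<mu> * v a)"
proof -
  have Hc: "H \<in> carrier_mat n n" using psdD(3)[OF H] .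
  obtain e v where e: "e \<noteq> 0" and ev: "eigenvector H v e"
    using psd_nonzero_eigenvalue[OF H nz] unfolding eigenvalue_def by blast
  define f where "f = (\<lambda>a. v $ a)"
  define s where "s = (\<Sum>a<n. (cmod (f a))\<^sup>2)"
  have Hf: "mat_app n H f a = e * f a" if "a < n" for a
    unfolding f_def by (rule eigenvector_mat_app(1)[OF Hc ev that])
  have s0: "s > 0" unfolding s_def f_def by (rule eigenvector_mat_app(2)[OF Hc ev])
  have "qform n H f = (\<Sum>a<n. cnj (f a) * (e * f a))" unfolding qform_mat_app by (intro sum.cong refl, simp add: Hf)
  also have "\<dots> = e * complex_of_real s" unfolding s_def sum_cnj_mult_self[symmetric]
    by (simp add: sum_distrib_left algebra_simps)
  finally have q: "qform n H f = e * complex_of_real s" .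
  from psdD(1)[OF H, of f] s0 have Ime: "Im e = 0" unfolding q by simp
  from psdD(2)[OF H, of f] s0 have "Re e \<ge> 0" unfolding q by (simp add: zero_le_mult_iff)
  with Ime e have Re0: "Re e > 0" by (simp add: complex_eq_iff less_le)
  have eR: "e = complex_of_real (Re e)" using Ime by (simp add: complex_eq_iff)
  define c where "c = complex_of_real (1 / sqrt s)"
  show ?thesis
  proof (intro exI conjI allI impI)
    show "Re e > 0" by (rule Re0)
    have "(\<Sum>a<n. (cmod (c * f a))\<^sup>2) = (\<Sum>a<n. (1 / s) * (cmod (f a))\<^sup>2)"
      unfolding c_def using s0 by (intro sum.cong refl, simp add: norm_mult norm_divide power_mult_distrib power_divide less_imp_le)
    also have "\<dots> = 1" using s0 unfolding s_def[symmetric] sum_distrib_left[symmetric] by simp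
    finally show "(\<Sum>a<n. (cmod (c * f a))\<^sup>2) = 1" .
    fix a assume "a < n"
    thus "mat_app n H (\<lambda>a. c * f a) a = complex_of_real (Re e) * (c * f a)"
      unfolding mat_app_scale using Hf eR by (simp add: algebra_simps)
  qed
qed

definition deflate :: "nat \<Rightarrow> complex mat \<Rightarrow> real \<Rightarrow> (nat \<Rightarrow> complex) \<Rightarrow> complex mat" where
  "deflate n H \<mu> v = mat n n (\<lambda>(a,b). H$$(a,b) - complex_of_real \<mu> * v a * cnj (v b))"

lemma mat_app_deflate:
  assumes "a < n"
  shows "mat_app n (deflate n H \<mu> v) f a = mat_app n H f a - complex_of_real \<mu> * v a * (\<Sum>b<n. cnj (v b) * f b)"
  unfolding mat_app_def deflate_def using assms
  by (simp add: algebra_simps sum_subtractf sum_distrib_left)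

lemma psd_deflate:
  assumes H: "psd n H" and v1: "(\<Sum>a<n. (cmod (v a))\<^sup>2) = 1"
    and Hv: "\<And>a. a < n \<Longrightarrow> mat_app n H v a = complex_of_real \<mu> * v a"
  shows "psd n (deflate n H \<mu> v)"
proof -
  have hH: "hermitian n H" by (rule psd_hermitian[OF H])
  have vv: "(\<Sum>a<n. cnj (v a) * v a) = 1" using v1 unfolding sum_cnj_mult_self by simp
  have q: "qform n (deflate n H \<mu> v) f = qform n H (\<lambda>a. f a - (\<Sum>b<n. cnj (v b) * f b) * v a)" for f
  proof -
    define \<alpha> where "\<alpha> = (\<Sum>b<n. cnj (v b) * f b)"
    define g where "g = (\<lambda>a. f a - \<alpha> * v a)"
    have ag: "mat_app n (deflate n H \<mu> v) f a = mat_app n H g a" if a: "a < n" for a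
      unfolding mat_app_deflate[OF a] g_def mat_app_diff mat_app_scale \<alpha>_def[symmetric] using Hv[OF a] by (simp add: algebra_simps)
    have z: "(\<Sum>a<n. cnj (v a) * mat_app n H g a) = 0"
    proof -
      have "(\<Sum>a<n. cnj (v a) * mat_app n H g a) = (\<Sum>a<n. cnj (mat_app n H v a) * g a)" by (rule hermitian_mat_app_adjoint[OF hH])
      also have "\<dots> = complex_of_real \<mu> * ((\<Sum>a<n. cnj (v a) * f a) - \<alpha> * (\<Sum>a<n. cnj (v a) * v a))"
        unfolding g_def by (simp add: Hv algebra_simps sum_subtractf sum_distrib_left)
      also have "\<dots> = 0" unfolding vv \<alpha>_def by simp
      finally show ?thesis .
    qed
    have "qform n (deflate n H \<mu> v) f = (\<Sum>a<n. cnj (f a) * mat_app n H g a)" unfolding qform_mat_app by (intro sum.cong refl, simp add: ag)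
    also have "\<dots> = (\<Sum>a<n. cnj (g a) * mat_app n H g a) + cnj \<alpha> * (\<Sum>a<n. cnj (v a) * mat_app n H g a)"
      unfolding g_def by (simp add: algebra_simps sum.distrib sum_distrib_left sum_subtractf)
    also have "\<dots> = qform n H g" unfolding z qform_mat_app by simp
    finally show ?thesis unfolding g_def \<alpha>_def .
  qed
  show ?thesis
  proof (rule psdI)
    show "deflate n H \<mu> v \<in> carrier_mat n n" by (simp add: deflate_def)
  qed (simp_all add: q psdD(1,2)[OF H])
qed

lemma orthonormal_fun_upd:
  assumes on: "orthonormal n {..<j} z" and v1: "(\<Sum>a<n. (cmod (v a))\<^sup>2) = 1"
    and orth: "\<And>l. l < j \<Longrightarrow> (\<Sum>a<n. cnj (z l a) * v a) = 0"
  shows "orthonormal n {..<Suc j} (z(j := v))"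
  unfolding orthonormal_def
proof (intro ballI)
  fix k l assume k: "k \<in> {..<Suc j}" and l: "l \<in> {..<Suc j}"
  have vv: "(\<Sum>a<n. cnj (v a) * v a) = 1" using v1 unfolding sum_cnj_mult_self by simp
  show "(\<Sum>a<n. cnj ((z(j := v)) k a) * (z(j := v)) l a) = (if k = l then 1 else 0)"
  proof (cases "k = j")
    case True
    show ?thesis
    proof (cases "l = j")
      case True with \<open>k = j\<close> show ?thesis using vv by simp
    next
      case False
      hence "l < j" using l by simp
      have "(\<Sum>a<n. cnj (v a) * z l a) = cnj (\<Sum>a<n. cnj (z l a) * v a)" by (rule cnj_inner_sum)
      with orth[OF \<open>l < j\<close>] False \<open>k = j\<close> show ?thesis by simp
    qed
  next
    case False
    hence "k < j" using k by simp
    show ?thesis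
    proof (cases "l = j")
      case True with orth[OF \<open>k < j\<close>] False show ?thesis by simp
    next
      case False
      hence "l < j" using l by simp
      with \<open>k < j\<close> on \<open>k \<noteq> j\<close> False show ?thesis unfolding orthonormal_def by simp
    qed
  qed
qed

lemma psd_deflation_step:
  fixes n :: nat
  assumes H: "psd n H" and on: "orthonormal n {..<j} z"
    and ker: "\<And>l a. l < j \<Longrightarrow> a < n \<Longrightarrow> mat_app n H (z l) a = 0"
    and nz: "a0 < n" "b0 < n" "H$$(a0,b0) \<noteq> 0"
  shows "\<exists>v \<mu>. \<mu> > 0 \<and> (\<Sum>a<n. (cmod (v a))\<^sup>2) = 1 \<and> (\<forall>a<n. mat_app n H v a = complex_of_real \<mu> * v a)
     \<and> orthonormal n {..<Suc j} (z(j := v)) \<and> psd n (deflate n H \<mu> v)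
     \<and> (\<forall>l<Suc j. \<forall>a<n. mat_app n (deflate n H \<mu> v) ((z(j := v)) l) a = 0) \<and> Suc j \<le> n"
proof -
  obtain v \<mu> where mu: "\<mu> > 0" and v1: "(\<Sum>a<n. (cmod (v a))\<^sup>2) = 1"
    and Hv: "\<And>a. a < n \<Longrightarrow> mat_app n H v a = complex_of_real \<mu> * v a"
    using psd_pos_eigenvector[OF H nz] by blast
  have hH: "hermitian n H" by (rule psd_hermitian[OF H])
  have vv: "(\<Sum>a<n. cnj (v a) * v a) = 1" using v1 unfolding sum_cnj_mult_self by simp
  have orth: "(\<Sum>a<n. cnj (z l a) * v a) = 0" if l: "l < j" for l
  proof -
    have "complex_of_real \<mu> * (\<Sum>a<n. cnj (z l a) * v a) = (\<Sum>a<n. cnj (z l a) * mat_app n H v a)"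
      by (simp add: Hv sum_distrib_left algebra_simps)
    also have "\<dots> = (\<Sum>a<n. cnj (mat_app n H (z l) a) * v a)" by (rule hermitian_mat_app_adjoint[OF hH])
    also have "\<dots> = 0" by (simp add: ker[OF l])
    finally show ?thesis using mu by simp
  qed
  have on': "orthonormal n {..<Suc j} (z(j := v))" by (rule orthonormal_fun_upd[OF on v1 orth])
  have card: "Suc j \<le> n" using card_orthonormal_le[OF _ on'] by simp
  have ker': "mat_app n (deflate n H \<mu> v) ((z(j := v)) l) a = 0" if l: "l < Suc j" and a: "a < n" for l a
  proof (cases "l = j")
    case True
    thus ?thesis unfolding mat_app_deflate[OF a] using Hv[OF a] vv by simp
  next
    case False
    hence lj: "l < j" using l by simp
    have "(\<Sum>b<n. cnj (v b) * z l b) = cnj (\<Sum>b<n. cnj (z l b) * v b)" by (rule cnj_inner_sum)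
    also have "\<dots> = 0" using orth[OF lj] by simp
    finally show ?thesis unfolding mat_app_deflate[OF a] using False ker[OF lj a] by simp
  qed
  show ?thesis using mu v1 Hv on' psd_deflate[OF H v1 Hv] ker' card by blast
qed

lemma spec_mat_undeflate:
  fixes n m :: nat
  assumes H: "psd n H" and v1: "(\<Sum>a<n. (cmod (v a))\<^sup>2) = 1"
    and Hv: "\<And>a. a < n \<Longrightarrow> mat_app n H v a = complex_of_real \<mu> * v a" and mu: "\<mu> > 0"
    and H'v: "\<And>a. a < n \<Longrightarrow> mat_app n (deflate n H \<mu> v) v a = 0"
    and mu': "\<And>i. i < m \<Longrightarrow> \<mu>' i > 0" and on: "orthonormal n {..<m} u"
    and H': "deflate n H \<mu> v = spec_mat n {..<m} (\<lambda>i. complex_of_real (\<mu>' i)) u"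
  shows "\<exists>(m::nat) u \<mu>. (\<forall>i<m. \<mu> i > 0) \<and> orthonormal n {..<m} u \<and> H = spec_mat n {..<m} (\<lambda>i. complex_of_real (\<mu> i)) u"
proof -
  have hH': "hermitian n (deflate n H \<mu> v)" unfolding H' by (rule hermitian_spec_mat)
  have orth: "(\<Sum>a<n. cnj (u i a) * v a) = 0" if i: "i < m" for i
  proof -
    have eig: "mat_app n (deflate n H \<mu> v) (u i) a = complex_of_real (\<mu>' i) * u i a" if a: "a < n" for a
      unfolding H' by (rule mat_app_spec_mat_eigen[OF a on], use i in auto)
    have "complex_of_real (\<mu>' i) * (\<Sum>a<n. cnj (u i a) * v a) = (\<Sum>a<n. cnj (mat_app n (deflate n H \<mu> v) (u i) a) * v a)"
      by (simp add: eig sum_distrib_left algebra_simps)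
    also have "\<dots> = (\<Sum>a<n. cnj (u i a) * mat_app n (deflate n H \<mu> v) v a)" by (rule hermitian_mat_app_adjoint[OF hH', symmetric])
    also have "\<dots> = 0" by (simp add: H'v)
    finally show ?thesis using mu'[OF i] by simp
  qed
  define u2 where "u2 = u(m := v)"
  define \<mu>2 where "\<mu>2 = \<mu>'(m := \<mu>)"
  show ?thesis
  proof (intro exI conjI allI impI)
    show "orthonormal n {..<Suc m} u2" unfolding u2_def by (rule orthonormal_fun_upd[OF on v1 orth])
    fix i assume "i < Suc m" thus "\<mu>2 i > 0" unfolding \<mu>2_def using mu mu' by (cases "i = m") auto
  next
    have Hc: "H \<in> carrier_mat n n" using psdD(3)[OF H] .
    show "H = spec_mat n {..<Suc m} (\<lambda>i. complex_of_real (\<mu>2 i)) u2"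
    proof (rule eq_matI)
      fix a b assume "a < dim_row (spec_mat n {..<Suc m} (\<lambda>i. complex_of_real (\<mu>2 i)) u2)"
        "b < dim_col (spec_mat n {..<Suc m} (\<lambda>i. complex_of_real (\<mu>2 i)) u2)"
      hence a: "a < n" and b: "b < n" by (auto simp: spec_mat_def)
      have "H$$(a,b) = deflate n H \<mu> v $$ (a,b) + complex_of_real \<mu> * v a * cnj (v b)"
        unfolding deflate_def using a b by simp
      also have "\<dots> = (\<Sum>i<m. complex_of_real (\<mu>' i) * u i a * cnj (u i b)) + complex_of_real \<mu> * v a * cnj (v b)"
        unfolding H' spec_mat_def using a b by simp
      also have "\<dots> = (\<Sum>i<Suc m. complex_of_real (\<mu>2 i) * u2 i a * cnj (u2 i b))"
        unfolding u2_def \<mu>2_def by simp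
      also have "\<dots> = spec_mat n {..<Suc m} (\<lambda>i. complex_of_real (\<mu>2 i)) u2 $$ (a,b)"
        unfolding spec_mat_def using a b by simp
      finally show "H$$(a,b) = spec_mat n {..<Suc m} (\<lambda>i. complex_of_real (\<mu>2 i)) u2 $$ (a,b)" .
    qed (use Hc in \<open>auto simp: spec_mat_def\<close>)
  qed
qed

lemma spec_mat_decomposition_zero:
  assumes "H \<in> carrier_mat n n" "\<And>a b. a < n \<Longrightarrow> b < n \<Longrightarrow> H$$(a,b) = 0"
  shows "\<exists>(m::nat) u \<mu>. (\<forall>i<m. \<mu> i > 0) \<and> orthonormal n {..<m} u
    \<and> H = spec_mat n {..<m} (\<lambda>i. complex_of_real (\<mu> i)) u"
proof (intro exI conjI)
  show "H = spec_mat n {..<0} (\<lambda>i. complex_of_real ((\<lambda>_. 1) i)) (\<lambda>_ _. 0)"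
    by (rule eq_matI) (use assms in \<open>auto simp: spec_mat_def\<close>)
qed (auto simp: orthonormal_def)

text \<open>Induction on the number d of eigenvectors still to be split off; the z l are those already
  split off, so they lie in the kernel of the remaining matrix H.\<close>

lemma psd_spectral_decomposition_aux:
  assumes "psd n H" "orthonormal n {..<j} z" "\<And>l a. l < j \<Longrightarrow> a < n \<Longrightarrow> mat_app n H (z l) a = 0"
    and "n \<le> j + d"
  shows "\<exists>(m::nat) u \<mu>. (\<forall>i<m. \<mu> i > 0) \<and> orthonormal n {..<m} u
    \<and> H = spec_mat n {..<m} (\<lambda>i. complex_of_real (\<mu> i)) u"
  using assms
proof (induction d arbitrary: H j z)
  case 0
  have "H$$(a,b) = 0" if "a < n" "b < n" for a b
  proof (rule ccontr)
    assume "H$$(a,b) \<noteq> 0"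
    from psd_deflation_step[OF "0.prems"(1,2) _ that this] "0.prems"(3) have "Suc j \<le> n" by blast
    with "0.prems"(4) show False by simp
  qed
  thus ?case by (rule spec_mat_decomposition_zero[OF psdD(3)[OF "0.prems"(1)]])
next
  case (Suc d)
  note H = Suc.prems(1)
  show ?case
  proof (cases "\<exists>a<n. \<exists>b<n. H$$(a,b) \<noteq> 0")
    case False
    thus ?thesis by (intro spec_mat_decomposition_zero psdD(3)[OF H]) auto
  next
    case True
    then obtain a b where ab: "a < n" "b < n" "H$$(a,b) \<noteq> 0" by blast
    from psd_deflation_step[OF H Suc.prems(2) _ ab] Suc.prems(3) obtain v \<mu> where
      mu: "\<mu> > 0" and v1: "(\<Sum>a<n. (cmod (v a))\<^sup>2) = 1" and Hv: "\<forall>a<n. mat_app n H v a = complex_of_real \<mu> * v a"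
      and on': "orthonormal n {..<Suc j} (z(j := v))" and H': "psd n (deflate n H \<mu> v)"
      and ker': "\<forall>l<Suc j. \<forall>a<n. mat_app n (deflate n H \<mu> v) ((z(j := v)) l) a = 0" by blast
    obtain m :: nat and u \<mu>' where mu': "\<forall>i<m. \<mu>' i > 0" and onu: "orthonormal n {..<m} u"
      and dec: "deflate n H \<mu> v = spec_mat n {..<m} (\<lambda>i. complex_of_real (\<mu>' i)) u"
      using Suc.IH[OF H' on'] ker' Suc.prems(4) by fastforce
    have H'v: "mat_app n (deflate n H \<mu> v) v a = 0" if "a < n" for a
      using ker' that by (metis fun_upd_same lessI)
    show ?thesis by (rule spec_mat_undeflate[OF H v1 _ mu H'v _ onu dec]) (use Hv mu' in auto)
  qed
qed

lemma psd_spectral_decomposition: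
  assumes "psd n H"
  shows "\<exists>(m::nat) u \<mu>. (\<forall>i<m. \<mu> i > 0) \<and> orthonormal n {..<m} u
    \<and> H = spec_mat n {..<m} (\<lambda>i. complex_of_real (\<mu> i)) u"
  by (rule psd_spectral_decomposition_aux[of n H 0 "\<lambda>_ _. 0" n]) (use assms in \<open>auto simp: orthonormal_def\<close>)

section \<open>Partial transposes of pure bipartite states\<close>

definition gram :: "nat \<Rightarrow> nat \<Rightarrow> (nat \<Rightarrow> nat \<Rightarrow> complex) \<Rightarrow> complex mat" where
  "gram p q M = mat p p (\<lambda>(x,x'). \<Sum>y<q. M x y * cnj (M x' y))"

definition schmidt_coef :: "nat \<Rightarrow> (nat \<Rightarrow> nat \<Rightarrow> complex) \<Rightarrow> (nat \<Rightarrow> nat \<Rightarrow> complex) \<Rightarrow> nat \<Rightarrow> nat \<Rightarrow> complex" where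
  "schmidt_coef p u M i y = (\<Sum>x<p. cnj (u i x) * M x y)"

text \<open>The partial transpose, on the first factor, of |psi><psi| for psi z = M (fst (e z)) (snd (e z)),
  where e identifies the basis indices {..<N} with pairs; gram p q M is the reduced state of
  that factor.\<close>

definition pure_ptrans :: "nat \<Rightarrow> (nat \<Rightarrow> nat \<times> nat) \<Rightarrow> (nat \<Rightarrow> nat \<Rightarrow> complex) \<Rightarrow> complex mat" where
  "pure_ptrans N e M = mat N N (\<lambda>(z,z'). M (fst (e z')) (snd (e z)) * cnj (M (fst (e z)) (snd (e z'))))"

definition purity :: "nat \<Rightarrow> nat \<Rightarrow> (nat \<Rightarrow> nat \<Rightarrow> complex) \<Rightarrow> real" where
  "purity p q M = (\<Sum>a<p. \<Sum>a'<p. (cmod (\<Sum>b<q. M a b * cnj (M a' b)))\<^sup>2)"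

lemma gram_carrier[simp]: "gram p q M \<in> carrier_mat p p" unfolding gram_def by simp

lemma psd_gram: "psd p (gram p q M)"
proof (rule psdI)
  fix f
  have "qform p (gram p q M) f = (\<Sum>x<p. \<Sum>x'<p. \<Sum>y<q. (cnj (f x) * M x y) * (cnj (M x' y) * f x'))"
    unfolding qform_def gram_def by (simp add: sum_distrib_left sum_distrib_right algebra_simps)
  also have "\<dots> = (\<Sum>x<p. \<Sum>y<q. \<Sum>x'<p. (cnj (f x) * M x y) * (cnj (M x' y) * f x'))"
    by (rule sum.cong[OF refl], rule sum.swap)
  also have "\<dots> = (\<Sum>y<q. \<Sum>x<p. \<Sum>x'<p. (cnj (f x) * M x y) * (cnj (M x' y) * f x'))" by (rule sum.swap)
  also have "\<dots> = (\<Sum>y<q. cnj (\<Sum>x<p. cnj (M x y) * f x) * (\<Sum>x<p. cnj (M x y) * f x))"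
    by (simp add: sum_distrib_left sum_distrib_right mult.commute)
  also have "\<dots> = complex_of_real (\<Sum>y<q. (cmod (\<Sum>x<p. cnj (M x y) * f x))\<^sup>2)"
    unfolding of_real_sum by (intro sum.cong refl, simp add: complex_norm_square mult.commute del: of_real_power)
  finally have e: "qform p (gram p q M) f = complex_of_real (\<Sum>y<q. (cmod (\<Sum>x<p. cnj (M x y) * f x))\<^sup>2)" .
  show "Im (qform p (gram p q M) f) = 0" unfolding e by simp
  show "Re (qform p (gram p q M) f) \<ge> 0" unfolding e by (simp add: sum_nonneg)
qed simp

lemma sum_bij_betw_prod:
  assumes "bij_betw e {..<N} ({..<p} \<times> {..<q})"
  shows "(\<Sum>w<N. g (fst (e w)) (snd (e w))) = (\<Sum>a<p. \<Sum>b<q. g a b)"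
proof -
  have "(\<Sum>w<N. g (fst (e w)) (snd (e w))) = (\<Sum>w<N. (case_prod g) (e w))" by (simp add: case_prod_beta)
  also have "\<dots> = (\<Sum>ab\<in>{..<p} \<times> {..<q}. case_prod g ab)" by (rule sum.reindex_bij_betw[OF assms])
  also have "\<dots> = (\<Sum>a<p. \<Sum>b<q. g a b)" by (simp add: sum.cartesian_product)
  finally show ?thesis .
qed

lemma dagger_pure_ptrans_mult:
  assumes bij: "bij_betw e {..<N} ({..<p} \<times> {..<q})"
  shows "dagger (pure_ptrans N e M) * pure_ptrans N e M = mat N N (\<lambda>(z,z').
     cnj (\<Sum>b<q. M (fst (e z)) b * cnj (M (fst (e z')) b)) * (\<Sum>a<p. M a (snd (e z)) * cnj (M a (snd (e z')))))"
    (is "?L = ?R")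
proof (rule eq_matI)
  fix z z' assume "z < dim_row ?R" "z' < dim_col ?R"
  hence z: "z < N" and z': "z' < N" by auto
  let ?x = "fst (e z)" and ?y = "snd (e z)" and ?x' = "fst (e z')" and ?y' = "snd (e z')"
  have "(dagger (pure_ptrans N e M) * pure_ptrans N e M) $$ (z,z') = (\<Sum>w<N. cnj (pure_ptrans N e M $$ (w,z)) * pure_ptrans N e M $$ (w,z'))"
    using z z' unfolding dagger_def pure_ptrans_def by (simp add: scalar_prod_def lessThan_atLeast0)
  also have "\<dots> = (\<Sum>w<N. (\<lambda>a b. cnj (M ?x b * cnj (M a ?y)) * (M ?x' b * cnj (M a ?y'))) (fst (e w)) (snd (e w)))"
    using z z' unfolding pure_ptrans_def by (intro sum.cong refl, simp)
  also have "\<dots> = (\<Sum>a<p. \<Sum>b<q. cnj (M ?x b * cnj (M a ?y)) * (M ?x' b * cnj (M a ?y')))"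
    by (rule sum_bij_betw_prod[OF bij])
  also have "\<dots> = (\<Sum>a<p. \<Sum>b<q. (cnj (M ?x b) * M ?x' b) * (M a ?y * cnj (M a ?y')))"
    by (intro sum.cong refl, simp add: algebra_simps)
  also have "\<dots> = (\<Sum>b<q. \<Sum>a<p. (cnj (M ?x b) * M ?x' b) * (M a ?y * cnj (M a ?y')))"
    by (rule sum.swap)
  also have "\<dots> = (\<Sum>b<q. cnj (M ?x b) * M ?x' b) * (\<Sum>a<p. M a ?y * cnj (M a ?y'))"
    by (simp add: sum_product)
  also have "\<dots> = cnj (\<Sum>b<q. M ?x b * cnj (M ?x' b)) * (\<Sum>a<p. M a ?y * cnj (M a ?y'))"
    by simp
  finally show "?L $$ (z,z') = ?R $$ (z,z')" using z z' by simp
qed (auto simp: dagger_def pure_ptrans_def)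

locale gram_decomposition =
  fixes p q m :: nat and M u :: "nat \<Rightarrow> nat \<Rightarrow> complex" and \<mu> :: "nat \<Rightarrow> real"
  assumes mu: "\<And>i. i < m \<Longrightarrow> \<mu> i > 0" and on: "orthonormal p {..<m} u"
    and dec: "gram p q M = spec_mat p {..<m} (\<lambda>i. complex_of_real (\<mu> i)) u"
begin

lemma mat_app_gram_eigen:
  assumes "i < m" "x < p"
  shows "mat_app p (gram p q M) (u i) x = complex_of_real (\<mu> i) * u i x"
  unfolding dec by (rule mat_app_spec_mat_eigen[OF assms(2) on], use assms in auto)

lemma schmidt_coef_orthogonal:
  assumes i: "i < m" and j: "j < m"
  shows "(\<Sum>y<q. cnj (schmidt_coef p u M i y) * schmidt_coef p u M j y) = (if i = j then complex_of_real (\<mu> i) else 0)"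
proof -
  have "(\<Sum>y<q. cnj (schmidt_coef p u M i y) * schmidt_coef p u M j y)
      = (\<Sum>y<q. \<Sum>x<p. \<Sum>x'<p. cnj (u j x') * (u i x * (M x' y * cnj (M x y))))"
    unfolding schmidt_coef_def by (simp add: sum_distrib_left sum_distrib_right algebra_simps)
  also have "\<dots> = (\<Sum>x<p. \<Sum>y<q. \<Sum>x'<p. cnj (u j x') * (u i x * (M x' y * cnj (M x y))))" by (rule sum.swap)
  also have "\<dots> = (\<Sum>x<p. \<Sum>x'<p. \<Sum>y<q. cnj (u j x') * (u i x * (M x' y * cnj (M x y))))"
    by (rule sum.cong[OF refl], rule sum.swap)
  also have "\<dots> = (\<Sum>x'<p. \<Sum>x<p. \<Sum>y<q. cnj (u j x') * (u i x * (M x' y * cnj (M x y))))" by (rule sum.swap)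
  also have "\<dots> = (\<Sum>x'<p. cnj (u j x') * mat_app p (gram p q M) (u i) x')"
    unfolding mat_app_def gram_def by (intro sum.cong refl, simp add: sum_distrib_left sum_distrib_right algebra_simps)
  also have "\<dots> = (\<Sum>x'<p. complex_of_real (\<mu> i) * (cnj (u j x') * u i x'))"
    by (intro sum.cong refl, simp add: mat_app_gram_eigen[OF i] algebra_simps)
  also have "\<dots> = complex_of_real (\<mu> i) * (if j = i then 1 else 0)"
    using on i j unfolding orthonormal_def by (simp add: sum_distrib_left[symmetric])
  finally show ?thesis by auto
qed

lemma sum_eigenvalues: "(\<Sum>i<m. \<mu> i) = (\<Sum>x<p. \<Sum>y<q. (cmod (M x y))\<^sup>2)"
proof -
  have "complex_of_real (\<Sum>x<p. \<Sum>y<q. (cmod (M x y))\<^sup>2) = (\<Sum>x<p. gram p q M $$ (x,x))"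
    unfolding gram_def of_real_sum by (simp add: complex_norm_square del: of_real_power)
  also have "\<dots> = complex_of_real (\<Sum>i<m. \<mu> i)"
    unfolding dec trace_spec_mat[OF finite_lessThan on] by simp
  finally show ?thesis by (simp only: of_real_eq_iff)
qed

lemma sum_sq_eigenvalues: "(\<Sum>i<m. (\<mu> i)\<^sup>2) = purity p q M"
proof -
  have cv: "\<And>z. z * cnj z = complex_of_real ((cmod z)\<^sup>2)" by (rule complex_norm_square[symmetric])
  have "complex_of_real (purity p q M) = (\<Sum>a<p. \<Sum>a'<p. gram p q M $$ (a,a') * cnj (gram p q M $$ (a,a')))"
    unfolding purity_def gram_def by (simp only: cv of_real_sum, intro sum.cong refl, simp)
  also have "\<dots> = (\<Sum>a<p. \<Sum>a'<p. gram p q M $$ (a,a') * gram p q M $$ (a',a))"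
    using hermitian_spec_mat[of p "{..<m}" \<mu> u] unfolding dec hermitian_def by (intro sum.cong refl) simp
  also have "\<dots> = (\<Sum>a<p. (gram p q M * gram p q M) $$ (a,a))"
    by (intro sum.cong refl) (simp add: index_mult_mat_sum[OF gram_carrier gram_carrier])
  also have "\<dots> = (\<Sum>i<m. complex_of_real (\<mu> i) * complex_of_real (\<mu> i))"
    unfolding dec spec_mat_mult[OF on finite_lessThan] trace_spec_mat[OF finite_lessThan on] ..
  also have "\<dots> = complex_of_real (\<Sum>i<m. (\<mu> i)\<^sup>2)" by (simp add: power2_eq_square)
  finally show ?thesis by (simp only: of_real_eq_iff)
qed

lemma schmidt_expansion:
  assumes x: "x < p" and y: "y < q"
  shows "M x y = (\<Sum>i<m. u i x * schmidt_coef p u M i y)"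
proof -
  let ?r = "\<lambda>y x. M x y - (\<Sum>i<m. u i x * schmidt_coef p u M i y)"
  have res: "(\<Sum>x<p. (cmod (?r y x))\<^sup>2)
      = (\<Sum>x<p. (cmod (M x y))\<^sup>2) - (\<Sum>i<m. (cmod (schmidt_coef p u M i y))\<^sup>2)" for y
    using orthonormal_projection_residual[OF finite_lessThan on, of "\<lambda>x. M x y"]
    unfolding schmidt_coef_def by simp
  have coef_norm: "(\<Sum>y<q. (cmod (schmidt_coef p u M i y))\<^sup>2) = \<mu> i" if "i < m" for i
    using schmidt_coef_orthogonal[OF that that] by (simp only: sum_cnj_mult_self if_P[OF refl] of_real_eq_iff)
  have M_norm: "(\<Sum>y<q. \<Sum>x<p. (cmod (M x y))\<^sup>2) = (\<Sum>i<m. \<mu> i)"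
    by (subst sum.swap) (rule sum_eigenvalues[symmetric])
  have "(\<Sum>y<q. \<Sum>x<p. (cmod (?r y x))\<^sup>2) = 0"
    unfolding res sum_subtractf M_norm by (subst sum.swap) (simp add: coef_norm)
  hence "(\<Sum>x<p. (cmod (?r y x))\<^sup>2) = 0" using y by (simp add: sum_nonneg_eq_0_iff sum_nonneg)
  hence "?r y x = 0" by (rule sum_cmod_sq_eq_0D[OF _ x])
  thus ?thesis by simp
qed

lemma col_inner_schmidt:
  assumes y: "y < q" and y': "y' < q"
  shows "(\<Sum>a<p. M a y * cnj (M a y')) = (\<Sum>j<m. schmidt_coef p u M j y * cnj (schmidt_coef p u M j y'))"
proof -
  have "(\<Sum>a<p. M a y * cnj (M a y')) = (\<Sum>a<p. (\<Sum>i<m. u i a * schmidt_coef p u M i y) * cnj (\<Sum>j<m. u j a * schmidt_coef p u M j y'))"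
    by (intro sum.cong refl, simp add: schmidt_expansion y y')
  also have "\<dots> = (\<Sum>a<p. \<Sum>i<m. \<Sum>j<m. (schmidt_coef p u M i y * cnj (schmidt_coef p u M j y')) * (cnj (u j a) * u i a))"
  proof (rule sum.cong[OF refl])
    fix a
    show "(\<Sum>i<m. u i a * schmidt_coef p u M i y) * cnj (\<Sum>j<m. u j a * schmidt_coef p u M j y') =
      (\<Sum>i<m. \<Sum>j<m. schmidt_coef p u M i y * cnj (schmidt_coef p u M j y') * (cnj (u j a) * u i a))"
      by (simp only: cnj_sum sum_product, rule sum.cong[OF refl], rule sum.cong[OF refl], simp add: algebra_simps)
  qed
  also have "\<dots> = (\<Sum>i<m. \<Sum>a<p. \<Sum>j<m. (schmidt_coef p u M i y * cnj (schmidt_coef p u M j y')) * (cnj (u j a) * u i a))"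
    by (rule sum.swap)
  also have "\<dots> = (\<Sum>i<m. \<Sum>j<m. \<Sum>a<p. (schmidt_coef p u M i y * cnj (schmidt_coef p u M j y')) * (cnj (u j a) * u i a))"
    by (rule sum.cong[OF refl], rule sum.swap)
  also have "\<dots> = (\<Sum>i<m. \<Sum>j<m. (schmidt_coef p u M i y * cnj (schmidt_coef p u M j y')) * (if j = i then 1 else 0))"
    using on unfolding orthonormal_def by (intro sum.cong refl, simp add: sum_distrib_left[symmetric])
  also have "\<dots> = (\<Sum>j<m. schmidt_coef p u M j y * cnj (schmidt_coef p u M j y'))"
    by (simp add: if_distrib cong: if_cong)
  finally show ?thesis .
qed

lemma cnj_gram_entry:
  assumes x: "x < p" and x': "x' < p"
  shows "cnj (\<Sum>b<q. M x b * cnj (M x' b)) = (\<Sum>i<m. complex_of_real (\<mu> i) * cnj (u i x) * u i x')"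
proof -
  have "(\<Sum>b<q. M x b * cnj (M x' b)) = gram p q M $$ (x,x')" unfolding gram_def using x x' by simp
  also have "\<dots> = (\<Sum>i<m. complex_of_real (\<mu> i) * u i x * cnj (u i x'))" unfolding dec spec_mat_def using x x' by simp
  finally show ?thesis by (simp add: mult.commute mult.left_commute)
qed

text \<open>For R = pure_ptrans N e M these are the eigenvectors of R^dagger R, with eigenvalues mu_i mu_j.\<close>

definition schmidt_vec :: "nat \<Rightarrow> (nat \<Rightarrow> nat \<times> nat) \<Rightarrow> nat \<times> nat \<Rightarrow> nat \<Rightarrow> complex" where
  "schmidt_vec N e ij z = cnj (u (fst ij) (fst (e z))) * schmidt_coef p u M (snd ij) (snd (e z)) / complex_of_real (sqrt (\<mu> (snd ij)))"

lemma orthonormal_schmidt_vec: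
  assumes bij: "bij_betw e {..<N} ({..<p} \<times> {..<q})"
  shows "orthonormal N ({..<m} \<times> {..<m}) (schmidt_vec N e)"
  unfolding orthonormal_def
proof (intro ballI)
  fix ij kl assume ij: "ij \<in> {..<m} \<times> {..<m}" and kl: "kl \<in> {..<m} \<times> {..<m}"
  obtain i j where ij': "ij = (i,j)" by force
  obtain k l where kl': "kl = (k,l)" by force
  from ij kl have i: "i < m" and j: "j < m" and k: "k < m" and l: "l < m" unfolding ij' kl' by auto
  let ?s = "\<lambda>j. complex_of_real (sqrt (\<mu> j))"
  have "(\<Sum>z<N. cnj (schmidt_vec N e ij z) * schmidt_vec N e kl z)
     = (\<Sum>z<N. (\<lambda>a b. (cnj (u k a) * u i a) * (cnj (schmidt_coef p u M j b) * schmidt_coef p u M l b) / (?s j * ?s l)) (fst (e z)) (snd (e z)))"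
    unfolding schmidt_vec_def ij' kl' by (intro sum.cong refl, simp add: algebra_simps)
  also have "\<dots> = (\<Sum>a<p. \<Sum>b<q. (cnj (u k a) * u i a) * (cnj (schmidt_coef p u M j b) * schmidt_coef p u M l b) / (?s j * ?s l))"
    by (rule sum_bij_betw_prod[OF bij])
  also have "\<dots> = (\<Sum>a<p. cnj (u k a) * u i a) * (\<Sum>b<q. cnj (schmidt_coef p u M j b) * schmidt_coef p u M l b) / (?s j * ?s l)"
    by (simp add: sum_product sum_divide_distrib)
  also have "\<dots> = (if k = i then 1 else 0) * (if j = l then complex_of_real (\<mu> j) else 0) / (?s j * ?s l)"
  proof -
    have cg: "(\<Sum>b<q. cnj (schmidt_coef p u M j b) * schmidt_coef p u M l b) = (if j = l then complex_of_real (\<mu> j) else 0)"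
      by (rule schmidt_coef_orthogonal[OF j l])
    have cu: "(\<Sum>a<p. cnj (u k a) * u i a) = (if k = i then 1 else 0)" using on i k unfolding orthonormal_def by simp
    show ?thesis unfolding cg cu ..
  qed
  also have "\<dots> = (if ij = kl then 1 else 0)"
  proof -
    have "?s j * ?s j = complex_of_real (\<mu> j)" using mu[OF j] by (simp add: less_imp_le flip: of_real_mult)
    moreover have "\<mu> j \<noteq> 0" using mu[OF j] by simp
    ultimately show ?thesis unfolding ij' kl' by auto
  qed
  finally show "(\<Sum>z<N. cnj (schmidt_vec N e ij z) * schmidt_vec N e kl z) = (if ij = kl then 1 else 0)" .
qed

lemma dagger_pure_ptrans_mult_spec_mat:
  assumes bij: "bij_betw e {..<N} ({..<p} \<times> {..<q})"
  shows "dagger (pure_ptrans N e M) * pure_ptrans N e M = spec_mat N ({..<m} \<times> {..<m}) (\<lambda>ij. complex_of_real (\<mu> (fst ij) * \<mu> (snd ij))) (schmidt_vec N e)"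
  unfolding dagger_pure_ptrans_mult[OF bij] spec_mat_def
proof (rule cong_mat[OF refl refl])
  fix z z' assume z: "z < N" and z': "z' < N"
  have ez: "fst (e z) < p" "snd (e z) < q" and ez': "fst (e z') < p" "snd (e z') < q"
    using bij_betwE[OF bij] z z' by force+
  let ?x = "fst (e z)" and ?y = "snd (e z)" and ?x' = "fst (e z')" and ?y' = "snd (e z')"
  let ?c = "schmidt_coef p u M"
  have "cnj (\<Sum>b<q. M ?x b * cnj (M ?x' b)) * (\<Sum>a<p. M a ?y * cnj (M a ?y'))
      = (\<Sum>i<m. complex_of_real (\<mu> i) * cnj (u i ?x) * u i ?x') * (\<Sum>j<m. ?c j ?y * cnj (?c j ?y'))"
    unfolding cnj_gram_entry[OF ez(1) ez'(1)] col_inner_schmidt[OF ez(2) ez'(2)] ..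
  also have "\<dots> = (\<Sum>i<m. \<Sum>j<m. (complex_of_real (\<mu> i) * cnj (u i ?x) * u i ?x') * (?c j ?y * cnj (?c j ?y')))"
    by (rule sum_product)
  also have "\<dots> = (\<Sum>ij\<in>{..<m} \<times> {..<m}. complex_of_real (\<mu> (fst ij) * \<mu> (snd ij)) * schmidt_vec N e ij z * cnj (schmidt_vec N e ij z'))"
    unfolding sum.cartesian_product'
  proof (rule sum.cong[OF refl], rule sum.cong[OF refl])
    fix i j assume i: "i \<in> {..<m}" and j: "j \<in> {..<m}"
    have sj: "cnj (complex_of_real (sqrt (\<mu> j))) * complex_of_real (sqrt (\<mu> j)) = complex_of_real (\<mu> j)"
      using mu j by (simp add: less_imp_le flip: of_real_mult)
    have "\<mu> j > 0" using mu j by simp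
    hence nz: "complex_of_real (sqrt (\<mu> j)) \<noteq> 0" by simp
    show "complex_of_real (\<mu> i) * cnj (u i ?x) * u i ?x' * (?c j ?y * cnj (?c j ?y')) =
       complex_of_real (\<mu> (fst (i,j)) * \<mu> (snd (i,j))) * schmidt_vec N e (i, j) z * cnj (schmidt_vec N e (i, j) z')"
      unfolding schmidt_vec_def using sj nz by (simp add: field_simps)
  qed
  finally show "(case (z, z') of (z, z') \<Rightarrow> cnj (\<Sum>b<q. M (fst (e z)) b * cnj (M (fst (e z')) b)) * (\<Sum>a<p. M a (snd (e z)) * cnj (M a (snd (e z'))))) =
        (case (z, z') of (a, b) \<Rightarrow> \<Sum>k\<in>{..<m} \<times> {..<m}. complex_of_real (\<mu> (fst k) * \<mu> (snd k)) * schmidt_vec N e k a * cnj (schmidt_vec N e k b))"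
    by simp
qed

lemma trace_norm_pure_ptrans:
  assumes bij: "bij_betw e {..<N} ({..<p} \<times> {..<q})"
  shows "trace_norm (pure_ptrans N e M) = (\<Sum>i<m. sqrt (\<mu> i))\<^sup>2"
proof -
  have "trace_norm (pure_ptrans N e M) = (\<Sum>ij\<in>{..<m} \<times> {..<m}. sqrt (\<mu> (fst ij) * \<mu> (snd ij)))"
    by (rule trace_norm_spec_mat[OF _ orthonormal_schmidt_vec[OF bij] _ _ dagger_pure_ptrans_mult_spec_mat[OF bij]])
       (auto simp: pure_ptrans_def intro!: mult_pos_pos mu)
  also have "\<dots> = (\<Sum>i<m. \<Sum>j<m. sqrt (\<mu> i) * sqrt (\<mu> j))"
    unfolding sum.cartesian_product' by (simp add: real_sqrt_mult)
  also have "\<dots> = (\<Sum>i<m. sqrt (\<mu> i))\<^sup>2" by (simp add: power2_eq_square sum_product)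
  finally show ?thesis .
qed

end

lemma orthonormal_lincomb_coeff:
  fixes m :: nat
  assumes on: "orthonormal p {..<m} u" and k: "k < m"
  shows "(\<Sum>x<p. cnj (u k x) * (\<Sum>i<m. a i * u i x)) = a k"
proof -
  have "(\<Sum>x<p. cnj (u k x) * (\<Sum>i<m. a i * u i x)) = (\<Sum>i<m. \<Sum>x<p. a i * (cnj (u k x) * u i x))"
    by (subst sum.swap) (simp add: sum_distrib_left algebra_simps)
  also have "\<dots> = (\<Sum>i<m. if i = k then a i else 0)"
    using on k unfolding orthonormal_def by (intro sum.cong refl) (auto simp: sum_distrib_left[symmetric])
  also have "\<dots> = a k" using k by simp
  finally show ?thesis .
qed

lemma orthonormal_vec_lin_indpt:
  fixes m :: nat
  assumes on: "orthonormal p {..<m} u"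
  shows "inj_on (\<lambda>i. vec p (u i)) {..<m}"
    and "LinearCombinations.module.lin_indpt class_ring (module_vec TYPE(complex) p) ((\<lambda>i. vec p (u i)) ` {..<m})"
proof -
  interpret V: vec_space "TYPE(complex)" p .
  define vs where "vs = (\<lambda>i. vec p (u i))"
  have vs_c: "vs i \<in> carrier_vec p" for i unfolding vs_def by simp
  have inj: "inj_on vs {..<m}"
  proof (rule inj_onI)
    fix i j assume i: "i \<in> {..<m}" and j: "j \<in> {..<m}" and e: "vs i = vs j"
    have "\<And>x. x < p \<Longrightarrow> u i x = u j x" using e unfolding vs_def by (metis index_vec)
    hence "(\<Sum>x<p. cnj (u i x) * u j x) = (\<Sum>x<p. cnj (u i x) * u i x)" by simp
    with on i j show "i = j" unfolding orthonormal_def by (auto split: if_splits)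
  qed
  have li: "V.lin_indpt (vs ` {..<m})"
  proof (rule V.finite_lin_indpt2)
    show "vs ` {..<m} \<subseteq> carrier_vec p" using vs_c by auto
    fix a assume lc: "V.lincomb a (vs ` {..<m}) = 0\<^sub>v p"
    have "(\<Sum>i<m. a (vs i) * u i x) = 0" if x: "x < p" for x
    proof -
      have "V.lincomb a (vs ` {..<m}) $ x = (\<Sum>w\<in>vs ` {..<m}. a w * w $ x)"
        by (rule V.lincomb_index[OF x]) (use vs_c in auto)
      also have "\<dots> = (\<Sum>i<m. a (vs i) * u i x)"
        by (subst sum.reindex[OF inj]) (simp add: vs_def x)
      finally show ?thesis using lc x by simp
    qed
    hence "a (vs k) = 0" if "k < m" for k
      using orthonormal_lincomb_coeff[OF on that, of "\<lambda>i. a (vs i)"] by simp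
    thus "\<forall>v\<in>vs ` {..<m}. a v = 0" by auto
  qed simp
  show "inj_on (\<lambda>i. vec p (u i)) {..<m}" "V.lin_indpt ((\<lambda>i. vec p (u i)) ` {..<m})"
    using inj li unfolding vs_def by auto
qed

lemma card_spec_le_rank:
  fixes p m :: nat
  assumes R: "R = spec_mat p {..<m} (\<lambda>i. complex_of_real (\<mu> i)) u"
    and mu: "\<And>i. i < m \<Longrightarrow> \<mu> i > 0" and on: "orthonormal p {..<m} u"
  shows "m \<le> vec_space.rank p R"
proof -
  interpret V: vec_space "TYPE(complex)" p .
  let ?C = "set (cols R)"
  have Rc: "R \<in> carrier_mat p p" unfolding R by simp
  have C: "?C \<subseteq> carrier_vec p" using Rc cols_dim by blast
  define vs where "vs = (\<lambda>i. vec p (u i))"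
  txt \<open>Each u i is an eigenvector with nonzero eigenvalue, hence a combination of the columns of R.\<close>
  have inspan: "vs i \<in> V.span ?C" if i: "i < m" for i
  proof -
    define a where "a = (\<lambda>c. \<Sum>b\<in>{b\<in>{..<p}. col R b = c}. u i b / complex_of_real (\<mu> i))"
    have "vs i = V.lincomb a ?C"
    proof (rule eq_vecI)
      fix x assume x: "x < dim_vec (V.lincomb a ?C)"
      hence x': "x < p" using V.lincomb_dim[OF _ C] by simp
      have "?C = col R ` {..<p}" using Rc unfolding cols_def by (auto simp: lessThan_atLeast0)
      hence "V.lincomb a ?C $ x
          = (\<Sum>c\<in>col R ` {..<p}. \<Sum>b\<in>{b\<in>{..<p}. col R b = c}. u i b / complex_of_real (\<mu> i) * col R b $ x)"
        unfolding V.lincomb_index[OF x' C] a_def by (simp add: sum_distrib_right)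
      also have "\<dots> = (\<Sum>b<p. u i b / complex_of_real (\<mu> i) * col R b $ x)"
        by (rule sum.image_gen[symmetric]) simp
      also have "\<dots> = mat_app p R (u i) x / complex_of_real (\<mu> i)"
        unfolding mat_app_def using Rc x' by (simp add: sum_divide_distrib algebra_simps)
      also have "\<dots> = u i x"
        unfolding R mat_app_spec_mat_eigen[OF x' on lessThan_iff[THEN iffD2, OF i] finite_lessThan]
        using mu[OF i] by simp
      finally show "vs i $ x = V.lincomb a ?C $ x" unfolding vs_def using x' by simp
    qed (simp add: vs_def V.lincomb_dim[OF _ C])
    thus ?thesis using C by (intro V.in_spanI[of _ a ?C]) auto
  qed
  have inj: "inj_on vs {..<m}" and li: "V.lin_indpt (vs ` {..<m})"
    unfolding vs_def by (fact orthonormal_vec_lin_indpt[OF on])+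
  have sub: "vs ` {..<m} \<subseteq> V.span ?C" using inspan by auto
  have li2: "LinearCombinations.module.lin_indpt class_ring (V.span_vs ?C) (vs ` {..<m})"
    using V.span_li_not_depend(2)[OF sub] li C V.span_is_submodule by blast
  have vsC: "vectorspace class_ring (V.span_vs ?C)"
    using V.span_is_subspace[OF C] V.subspace_is_vs by blast
  have "card (vs ` {..<m}) \<le> vectorspace.dim class_ring (V.span_vs ?C)"
    using vectorspace.li_le_dim(2)[OF vsC V.fin_dim_span_cols[OF Rc] _ li2] sub by simp
  moreover have "card (vs ` {..<m}) = m" using card_image[OF inj] by simp
  ultimately show ?thesis unfolding V.rank_def by simp
qed

section \<open>Inequalities for the Schmidt coefficients\<close>

lemma cauchy_schwarz_sum:
  fixes a b :: "'a \<Rightarrow> real"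
  assumes "finite I"
  shows "(\<Sum>i\<in>I. a i * b i)\<^sup>2 \<le> (\<Sum>i\<in>I. (a i)\<^sup>2) * (\<Sum>i\<in>I. (b i)\<^sup>2)"
proof -
  have "0 \<le> (\<Sum>i\<in>I. \<Sum>j\<in>I. (a i * b j - a j * b i)\<^sup>2)" by (intro sum_nonneg) auto
  also have "\<dots> = (\<Sum>i\<in>I. \<Sum>j\<in>I. (a i)\<^sup>2 * (b j)\<^sup>2 + (a j)\<^sup>2 * (b i)\<^sup>2 - 2 * ((a i * b i) * (a j * b j)))"
    by (intro sum.cong refl) (simp add: power2_eq_square algebra_simps)
  also have "\<dots> = 2 * ((\<Sum>i\<in>I. (a i)\<^sup>2) * (\<Sum>i\<in>I. (b i)\<^sup>2)) - 2 * (\<Sum>i\<in>I. a i * b i)\<^sup>2"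
  proof -
    have e1: "(\<Sum>i\<in>I. \<Sum>j\<in>I. (a i)\<^sup>2 * (b j)\<^sup>2) = (\<Sum>i\<in>I. (a i)\<^sup>2) * (\<Sum>i\<in>I. (b i)\<^sup>2)"
      by (simp add: sum_product)
    have e2: "(\<Sum>i\<in>I. \<Sum>j\<in>I. (a j)\<^sup>2 * (b i)\<^sup>2) = (\<Sum>i\<in>I. (a i)\<^sup>2) * (\<Sum>i\<in>I. (b i)\<^sup>2)"
      by (subst sum.swap) (simp add: sum_product mult.commute)
    have e3: "(\<Sum>i\<in>I. \<Sum>j\<in>I. (a i * b i) * (a j * b j)) = (\<Sum>i\<in>I. a i * b i)\<^sup>2"
      by (simp add: sum_product power2_eq_square)
    have "(\<Sum>i\<in>I. \<Sum>j\<in>I. (a i)\<^sup>2 * (b j)\<^sup>2 + (a j)\<^sup>2 * (b i)\<^sup>2 - 2 * ((a i * b i) * (a j * b j)))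
       = (\<Sum>i\<in>I. \<Sum>j\<in>I. (a i)\<^sup>2 * (b j)\<^sup>2) + (\<Sum>i\<in>I. \<Sum>j\<in>I. (a j)\<^sup>2 * (b i)\<^sup>2)
         - 2 * (\<Sum>i\<in>I. \<Sum>j\<in>I. (a i * b i) * (a j * b j))"
      by (simp only: sum.distrib sum_subtractf sum_distrib_left[symmetric])
    thus ?thesis unfolding e1 e2 e3 by simp
  qed
  finally show ?thesis by simp
qed

lemma power_sum_inequalities:
  fixes s :: "nat \<Rightarrow> real"
  assumes "\<And>i. i < m \<Longrightarrow> s i \<ge> 0"
  shows "(\<Sum>i<m. (s i)\<^sup>2) \<le> (\<Sum>i<m. s i)\<^sup>2 \<and>
    2 * ((\<Sum>i<m. (s i)\<^sup>2)\<^sup>2 - (\<Sum>i<m. (s i)^4)) \<le> ((\<Sum>i<m. s i)\<^sup>2 - (\<Sum>i<m. (s i)\<^sup>2))\<^sup>2"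
  using assms
proof (induction m)
  case 0 then show ?case by simp
next
  case (Suc m)
  define S where "S = (\<Sum>i<m. s i)"
  define A where "A = (\<Sum>i<m. (s i)\<^sup>2)"
  define B where "B = (\<Sum>i<m. (s i)^4)"
  define t where "t = s m"
  have IH: "A \<le> S\<^sup>2" "2 * (A\<^sup>2 - B) \<le> (S\<^sup>2 - A)\<^sup>2" using Suc unfolding S_def A_def B_def by auto
  have t0: "t \<ge> 0" unfolding t_def using Suc.prems by simp
  have S0: "S \<ge> 0" unfolding S_def using Suc.prems by (intro sum_nonneg) auto
  define X where "X = S\<^sup>2 - A"
  have X0: "X \<ge> 0" using IH(1) unfolding X_def by simp
  have St: "S * t \<ge> 0" using S0 t0 by simp
  have a: "A + t\<^sup>2 \<le> (S + t)\<^sup>2" using IH(1) St by (simp add: power2_eq_square algebra_simps)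
  have "2 * ((A + t\<^sup>2)\<^sup>2 - (B + t^4)) = 2 * (A\<^sup>2 - B) + 4 * A * t\<^sup>2"
    by (simp add: power2_eq_square power4_eq_xxxx algebra_simps)
  also have "\<dots> \<le> X\<^sup>2 + 4 * A * t\<^sup>2" using IH(2) unfolding X_def by simp
  also have "\<dots> \<le> X\<^sup>2 + 4 * A * t\<^sup>2 + (4 * S * t * X + 4 * t\<^sup>2 * X)"
    using X0 S0 t0 by (simp add: add_nonneg_nonneg)
  also have "\<dots> = ((S + t)\<^sup>2 - (A + t\<^sup>2))\<^sup>2" unfolding X_def by (simp add: power2_eq_square algebra_simps)
  finally have b: "2 * ((A + t\<^sup>2)\<^sup>2 - (B + t^4)) \<le> ((S + t)\<^sup>2 - (A + t\<^sup>2))\<^sup>2" .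
  show ?case using a b unfolding S_def A_def B_def t_def by (simp add: add.commute)
qed

lemma sum_sq_le_1:
  fixes \<mu> :: "nat \<Rightarrow> real"
  assumes "\<And>i. i < m \<Longrightarrow> \<mu> i \<ge> 0" "(\<Sum>i<m. \<mu> i) = 1"
  shows "(\<Sum>i<m. (\<mu> i)\<^sup>2) \<le> 1"
  using power_sum_inequalities[of m \<mu>] assms by simp

lemma sum_sqrt_sq_lower:
  fixes \<mu> :: "nat \<Rightarrow> real"
  assumes mu: "\<And>i. i < m \<Longrightarrow> \<mu> i > 0" and s1: "(\<Sum>i<m. \<mu> i) = 1"
  shows "sqrt ((1 - (\<Sum>i<m. (\<mu> i)\<^sup>2)) / 2) \<le> ((\<Sum>i<m. sqrt (\<mu> i))\<^sup>2 - 1) / 2"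
proof -
  have sq: "(\<Sum>i<m. (sqrt (\<mu> i))\<^sup>2) = 1" using mu s1 by (simp add: less_imp_le)
  have s4: "(\<Sum>i<m. (sqrt (\<mu> i))^4) = (\<Sum>i<m. (\<mu> i)\<^sup>2)"
  proof (intro sum.cong refl)
    fix i assume "i \<in> {..<m}"
    hence "\<mu> i \<ge> 0" using mu by (simp add: less_imp_le)
    have "(sqrt (\<mu> i))^4 = ((sqrt (\<mu> i))\<^sup>2)\<^sup>2" by (simp flip: power_mult)
    thus "(sqrt (\<mu> i))^4 = (\<mu> i)\<^sup>2" using \<open>\<mu> i \<ge> 0\<close> by simp
  qed
  from power_sum_inequalities[of m "\<lambda>i. sqrt (\<mu> i)"] mu
  have L: "1 \<le> (\<Sum>i<m. sqrt (\<mu> i))\<^sup>2" "2 * (1 - (\<Sum>i<m. (\<mu> i)\<^sup>2)) \<le> ((\<Sum>i<m. sqrt (\<mu> i))\<^sup>2 - 1)\<^sup>2"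
    unfolding sq s4 by (auto simp: less_imp_le)
  show ?thesis
    by (rule real_le_lsqrt) (use L in \<open>auto simp: power_divide\<close>)
qed

lemma offdiag_sum_sq_le:
  fixes x :: "nat \<Rightarrow> nat \<Rightarrow> real"
  shows "(\<Sum>i<m. \<Sum>j<m. if i = j then 0 else x i j)\<^sup>2
       \<le> real m * (real m - 1) * (\<Sum>i<m. \<Sum>j<m. if i = j then 0 else (x i j)\<^sup>2)"
proof -
  let ?c = "\<lambda>ij::nat \<times> nat. if fst ij = snd ij then 0 else (1::real)"
  have "(\<Sum>i<m. \<Sum>j<m. if i = j then 0 else x i j) = (\<Sum>ij\<in>{..<m} \<times> {..<m}. ?c ij * (?c ij * x (fst ij) (snd ij)))"
    unfolding sum.cartesian_product' by (intro sum.cong refl) simp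
  also have "\<dots>\<^sup>2 \<le> (\<Sum>ij\<in>{..<m} \<times> {..<m}. (?c ij)\<^sup>2) * (\<Sum>ij\<in>{..<m} \<times> {..<m}. (?c ij * x (fst ij) (snd ij))\<^sup>2)"
    by (rule cauchy_schwarz_sum) simp
  also have "(\<Sum>ij\<in>{..<m} \<times> {..<m}. (?c ij)\<^sup>2) = real m * (real m - 1)"
  proof -
    have "(\<Sum>ij\<in>{..<m} \<times> {..<m}. (?c ij)\<^sup>2) = (\<Sum>i<m. \<Sum>j<m. 1 - (if i = j then 1 else 0))"
      unfolding sum.cartesian_product' by (intro sum.cong refl) auto
    also have "\<dots> = (\<Sum>i<m. real m - 1)" by (intro sum.cong refl) (simp add: sum_subtractf)
    finally show ?thesis by simp
  qed
  also have "(\<Sum>ij\<in>{..<m} \<times> {..<m}. (?c ij * x (fst ij) (snd ij))\<^sup>2)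
      = (\<Sum>i<m. \<Sum>j<m. if i = j then 0 else (x i j)\<^sup>2)"
    unfolding sum.cartesian_product' by (intro sum.cong refl) simp
  finally show ?thesis .
qed

lemma sum_sqrt_sq_upper:
  fixes \<mu> :: "nat \<Rightarrow> real"
  assumes mu: "\<And>i. i < m \<Longrightarrow> \<mu> i > 0" and s1: "(\<Sum>i<m. \<mu> i) = 1"
  shows "((\<Sum>i<m. sqrt (\<mu> i))\<^sup>2 - 1) / 2 \<le> sqrt (real m * (real m - 1) * (1 - (\<Sum>i<m. (\<mu> i)\<^sup>2))) / 2"
proof -
  let ?s = "\<lambda>i. sqrt (\<mu> i)"
  define E where "E = (\<Sum>i<m. \<Sum>j<m. if i = j then 0 else ?s i * ?s j)"
  have sq: "?s i * ?s i = \<mu> i" if "i < m" for i using mu[OF that] by simp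
  have "(\<Sum>i<m. ?s i)\<^sup>2 = (\<Sum>i<m. \<Sum>j<m. (if i = j then \<mu> i else 0) + (if i = j then 0 else ?s i * ?s j))"
    unfolding power2_eq_square sum_product by (intro sum.cong refl) (auto simp: sq abs_of_pos[OF mu])
  also have "\<dots> = 1 + E" unfolding E_def s1[symmetric] by (simp add: sum.distrib)
  finally have S2: "(\<Sum>i<m. ?s i)\<^sup>2 = 1 + E" .
  have "(\<Sum>i<m. \<Sum>j<m. if i = j then 0 else (?s i * ?s j)\<^sup>2)
      = (\<Sum>i<m. \<Sum>j<m. \<mu> i * \<mu> j - (if i = j then (\<mu> i)\<^sup>2 else 0))"
    using mu by (intro sum.cong refl) (auto simp: power2_eq_square less_imp_le real_sqrt_mult[symmetric])
  also have "\<dots> = 1 - (\<Sum>i<m. (\<mu> i)\<^sup>2)"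
    by (simp add: sum_subtractf sum_product[symmetric] s1)
  finally have "E\<^sup>2 \<le> real m * (real m - 1) * (1 - (\<Sum>i<m. (\<mu> i)\<^sup>2))"
    using offdiag_sum_sq_le[where m=m and x="\<lambda>i j. ?s i * ?s j"] unfolding E_def by simp
  hence "E \<le> sqrt (real m * (real m - 1) * (1 - (\<Sum>i<m. (\<mu> i)\<^sup>2)))"
    by (rule real_le_rsqrt)
  thus ?thesis unfolding S2 by simp
qed

lemma negativity_combination:
  fixes NA NB NC PA PB PC :: real and d :: nat
  assumes d2: "d \<ge> 2"
    and UA: "NA \<le> sqrt (real d * (real d - 1) * (1 - PA)) / 2"
    and LB: "sqrt ((1 - PB) / 2) \<le> NB" and LC: "sqrt ((1 - PC) / 2) \<le> NC"
    and PA1: "PA \<le> 1" and PB1: "PB \<le> 1" and PC1: "PC \<le> 1"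
    and T: "PB + PC \<le> 1 + PA"
  shows "sqrt (2 / (real d * (real d - 1))) * NA \<le> NB + NC"
proof -
  define D where "D = real d * (real d - 1)"
  have D: "D > 0" unfolding D_def using d2 by simp
  have "sqrt (2 / D) * NA \<le> sqrt (2 / D) * (sqrt (D * (1 - PA)) / 2)"
    by (rule mult_left_mono[OF UA[folded D_def]]) (use D in simp)
  also have "\<dots> = sqrt (2 / D * (D * (1 - PA))) / 2"
    by (simp only: times_divide_eq_right real_sqrt_mult[symmetric])
  also have "2 / D * (D * (1 - PA)) = 4 * ((1 - PA) / 2)"
    using D by (simp add: field_simps)
  also have "sqrt (4 * ((1 - PA) / 2)) / 2 = sqrt ((1 - PA) / 2)" by (simp only: real_sqrt_mult real_sqrt_four)
  also have "\<dots> \<le> sqrt ((1 - PB) / 2 + (1 - PC) / 2)" using T by (intro real_sqrt_le_mono) (simp add: field_simps)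
  also have "\<dots> \<le> sqrt ((1 - PB) / 2) + sqrt ((1 - PC) / 2)"
    by (rule sqrt_add_le_add_sqrt) (use PB1 PC1 in auto)
  also have "\<dots> \<le> NB + NC" using LB LC by simp
  finally show ?thesis unfolding D_def .
qed

lemma pure_ptrans_negativity_bounds:
  fixes N p q :: nat and e :: "nat \<Rightarrow> nat \<times> nat" and M :: "nat \<Rightarrow> nat \<Rightarrow> complex"
  assumes bij: "bij_betw e {..<N} ({..<p} \<times> {..<q})"
    and Me: "\<And>z. z < N \<Longrightarrow> M (fst (e z)) (snd (e z)) = \<psi> $ z"
    and n1: "(\<Sum>z<N. (cmod (\<psi> $ z))\<^sup>2) = 1"
  shows "purity p q M \<le> 1"
    and "sqrt ((1 - purity p q M) / 2) \<le> (trace_norm (pure_ptrans N e M) - 1) / 2"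
    and "(trace_norm (pure_ptrans N e M) - 1) / 2
         \<le> sqrt (real (vec_space.rank p (gram p q M)) * (real (vec_space.rank p (gram p q M)) - 1)
                 * (1 - purity p q M)) / 2"
proof -
  obtain m :: nat and u \<mu> where mu: "\<And>i. i < m \<Longrightarrow> \<mu> i > 0" and on: "orthonormal p {..<m} u"
    and dec: "gram p q M = spec_mat p {..<m} (\<lambda>i. complex_of_real (\<mu> i)) u"
    using psd_spectral_decomposition[OF psd_gram[of p q M]] by blast
  interpret gram_decomposition p q m M u \<mu> by unfold_locales (fact mu on dec)+
  define r where "r = vec_space.rank p (gram p q M)"
  have "(\<Sum>i<m. \<mu> i) = (\<Sum>z<N. (cmod (M (fst (e z)) (snd (e z))))\<^sup>2)"
    unfolding sum_eigenvalues by (rule sum_bij_betw_prod[OF bij, symmetric])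
  also have "\<dots> = 1" using Me n1 by simp
  finally have s1: "(\<Sum>i<m. \<mu> i) = 1" .
  have tn: "trace_norm (pure_ptrans N e M) = (\<Sum>i<m. sqrt (\<mu> i))\<^sup>2"
    by (rule trace_norm_pure_ptrans[OF bij])
  show P1: "purity p q M \<le> 1"
    using sum_sq_le_1[of m \<mu>] mu s1 unfolding sum_sq_eigenvalues by (auto intro: less_imp_le)
  show "sqrt ((1 - purity p q M) / 2) \<le> (trace_norm (pure_ptrans N e M) - 1) / 2"
    using sum_sqrt_sq_lower[OF mu s1] unfolding tn sum_sq_eigenvalues .
  have "m \<le> r" unfolding r_def by (rule card_spec_le_rank[OF dec mu on])
  hence "real m * (real m - 1) \<le> real r * (real r - 1)"
    by (cases m; cases r) (auto intro!: mult_mono)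
  hence "real m * (real m - 1) * (1 - purity p q M) \<le> real r * (real r - 1) * (1 - purity p q M)"
    using P1 by (intro mult_right_mono) auto
  with sum_sqrt_sq_upper[OF mu s1]
  show "(trace_norm (pure_ptrans N e M) - 1) / 2 \<le> sqrt (real r * (real r - 1) * (1 - purity p q M)) / 2"
    unfolding tn sum_sq_eigenvalues by (smt (verit) divide_right_mono real_sqrt_le_mono)
qed

section \<open>The three cuts of a tripartite pure state\<close>

lemma bij_betw_div_mod:
  fixes p q :: nat
  assumes q: "q > 0"
  shows "bij_betw (\<lambda>z. (z div q, z mod q)) {..<p * q} ({..<p} \<times> {..<q})"
proof (rule bij_betw_byWitness[where f' = "\<lambda>(a,b). a * q + b"])
  show "\<forall>z\<in>{..<p * q}. (case (z div q, z mod q) of (a, b) \<Rightarrow> a * q + b) = z" by simp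
  show "\<forall>ab\<in>{..<p} \<times> {..<q}. ((case ab of (a, b) \<Rightarrow> a * q + b) div q, (case ab of (a, b) \<Rightarrow> a * q + b) mod q) = ab"
    using q by auto
  show "(\<lambda>z. (z div q, z mod q)) ` {..<p * q} \<subseteq> {..<p} \<times> {..<q}"
    using q by (auto simp: less_mult_imp_div_less mult.commute)
  show "(\<lambda>(a, b). a * q + b) ` ({..<p} \<times> {..<q}) \<subseteq> {..<p * q}"
  proof
    fix z assume "z \<in> (\<lambda>(a, b). a * q + b) ` ({..<p} \<times> {..<q})"
    then obtain a b where ab: "a < p" "b < q" "z = a * q + b" by auto
    have "a * q + b < (a + 1) * q" using ab by simp
    also have "\<dots> \<le> p * q" using ab by (intro mult_right_mono) auto
    finally show "z \<in> {..<p * q}" using ab by simp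
  qed
qed

lemma sum_mult_split:
  fixes p q :: nat
  assumes "q > 0"
  shows "(\<Sum>z<p * q. g z) = (\<Sum>a<p. \<Sum>b<q. g (a * q + b))"
  using sum_bij_betw_prod[OF bij_betw_div_mod[OF assms], of "\<lambda>a b. g (a * q + b)" p] by simp

lemma idx3_bound:
  fixes nA nB nC :: nat
  assumes "i < nA" "j < nB" "k < nC"
  shows "idx3 nB nC i j k < nA * nB * nC"
proof -
  have "j * nC + k < (j + 1) * nC" using assms by simp
  also have "\<dots> \<le> nB * nC" using assms by (intro mult_right_mono) auto
  finally have "i * (nB * nC) + (j * nC + k) < (i + 1) * (nB * nC)" by simp
  also have "\<dots> \<le> nA * (nB * nC)" using assms by (intro mult_right_mono) auto
  finally show ?thesis unfolding idx3_def by (simp add: mult.assoc add.assoc)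
qed

lemma div_mod_mult_add_mod: "(z div nC mod nB) * nC + z mod nC = z mod (nB * nC)" for z nB nC :: nat
  using mod_mult2_eq[of z nC nB] by (simp add: mult.commute)

lemma div_mult_add_div_mod: "z div (nB * nC) * nB + z div nC mod nB = z div nC" for z nB nC :: nat
  using div_mult2_eq[of z nC nB] div_mult_mod_eq[of "z div nC" nB] by (simp add: mult.commute)

lemma idx3_dec3: "idx3 nB nC (z div (nB * nC)) (z div nC mod nB) (z mod nC) = z"
  unfolding idx3_def add.assoc div_mod_mult_add_mod by (rule div_mult_mod_eq)

lemma dec3_idx3:
  fixes nB nC :: nat
  assumes "j < nB" "k < nC"
  shows "idx3 nB nC i j k div (nB * nC) = i" "idx3 nB nC i j k div nC mod nB = j" "idx3 nB nC i j k mod nC = k"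
proof -
  have "j * nC + k < (j + 1) * nC" using assms by simp
  also have "\<dots> \<le> nB * nC" using assms by (intro mult_right_mono) auto
  finally have jk: "j * nC + k < nB * nC" .
  have x: "idx3 nB nC i j k = (i * nB + j) * nC + k" unfolding idx3_def by (simp add: algebra_simps)
  have "nB * nC \<noteq> 0" using assms by simp
  then show "idx3 nB nC i j k div (nB * nC) = i"
    unfolding idx3_def add.assoc by (subst add.commute) (simp add: jk div_less)
  show "idx3 nB nC i j k div nC mod nB = j" unfolding x using assms by simp
  show "idx3 nB nC i j k mod nC = k" unfolding x using assms by simp
qed

lemma dec3_bounds:
  fixes z nA nB nC :: nat
  assumes z: "z < nA * nB * nC"
  shows "z div (nB * nC) < nA" "z div nC mod nB < nB" "z mod nC < nC"
proof -
  have pos: "nB > 0" "nC > 0" using z by (auto intro: ccontr)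
  show "z div (nB * nC) < nA" using z pos by (simp add: div_less_iff_less_mult mult.assoc)
  show "z div nC mod nB < nB" "z mod nC < nC" using pos by simp_all
qed

lemma ptrans3_proj_eq_pure_ptrans:
  assumes psi: "\<psi> \<in> carrier_vec (nA * nB * nC)"
    and M: "\<And>z z'. z < nA * nB * nC \<Longrightarrow> z' < nA * nB * nC \<Longrightarrow> M (fst (e z')) (snd (e z))
      = \<psi> $ idx3 nB nC (if tA then z' div (nB * nC) else z div (nB * nC))
                      (if tB then z' div nC mod nB else z div nC mod nB) (if tC then z' mod nC else z mod nC)"
  shows "ptrans3 nA nB nC tA tB tC (proj \<psi>) = pure_ptrans (nA * nB * nC) e M"
proof (rule eq_matI)
  fix z z' assume "z < dim_row (pure_ptrans (nA * nB * nC) e M)" "z' < dim_col (pure_ptrans (nA * nB * nC) e M)"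
  hence z: "z < nA * nB * nC" and z': "z' < nA * nB * nC" by (auto simp: pure_ptrans_def)
  note b = dec3_bounds[OF z] and b' = dec3_bounds[OF z']
  let ?i = "\<lambda>z z'. idx3 nB nC (if tA then z' div (nB * nC) else z div (nB * nC))
                      (if tB then z' div nC mod nB else z div nC mod nB) (if tC then z' mod nC else z mod nC)"
  have "?i z z' < nA * nB * nC" "?i z' z < nA * nB * nC"
    using b b' by (auto intro!: idx3_bound)
  hence "ptrans3 nA nB nC tA tB tC (proj \<psi>) $$ (z,z') = \<psi> $ ?i z z' * cnj (\<psi> $ ?i z' z)"
    using z z' psi unfolding ptrans3_def dec3_def proj_def by simp
  thus "ptrans3 nA nB nC tA tB tC (proj \<psi>) $$ (z,z') = pure_ptrans (nA * nB * nC) e M $$ (z,z')"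
    unfolding pure_ptrans_def using z z' M[OF z z'] M[OF z' z] by simp
qed (auto simp: pure_ptrans_def ptrans3_def)

definition split_A :: "nat \<Rightarrow> nat \<Rightarrow> nat \<Rightarrow> nat \<times> nat" where
  "split_A nB nC z = (z div (nB * nC), z mod (nB * nC))"

definition coef_A :: "nat \<Rightarrow> nat \<Rightarrow> complex vec \<Rightarrow> nat \<Rightarrow> nat \<Rightarrow> complex" where
  "coef_A nB nC \<psi> a b = \<psi> $ (a * (nB * nC) + b)"

definition split_AB :: "nat \<Rightarrow> nat \<Rightarrow> nat \<times> nat" where
  "split_AB nC z = (z div nC, z mod nC)"

definition coef_AB :: "nat \<Rightarrow> complex vec \<Rightarrow> nat \<Rightarrow> nat \<Rightarrow> complex" where
  "coef_AB nC \<psi> a b = \<psi> $ (a * nC + b)"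

text \<open>For the cut AC|B the row index (i, k) is encoded as i * nC + k.\<close>

definition split_AC :: "nat \<Rightarrow> nat \<Rightarrow> nat \<Rightarrow> nat \<times> nat" where
  "split_AC nB nC z = (z div (nB * nC) * nC + z mod nC, z div nC mod nB)"

definition coef_AC :: "nat \<Rightarrow> nat \<Rightarrow> complex vec \<Rightarrow> nat \<Rightarrow> nat \<Rightarrow> complex" where
  "coef_AC nB nC \<psi> a b = \<psi> $ idx3 nB nC (a div nC) b (a mod nC)"

lemma coef_A_split_A: "coef_A nB nC \<psi> (fst (split_A nB nC z)) (snd (split_A nB nC z)) = \<psi> $ z"
  unfolding coef_A_def split_A_def fst_conv snd_conv div_mult_mod_eq ..

lemma coef_AB_split_AB: "coef_AB nC \<psi> (fst (split_AB nC z)) (snd (split_AB nC z)) = \<psi> $ z"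
  unfolding coef_AB_def split_AB_def fst_conv snd_conv div_mult_mod_eq ..

lemma coef_AC_split_AC:
  assumes "nC > 0"
  shows "coef_AC nB nC \<psi> (fst (split_AC nB nC z)) (snd (split_AC nB nC z)) = \<psi> $ z"
  unfolding coef_AC_def split_AC_def using assms by (simp add: idx3_dec3)

lemma bij_betw_split_A:
  "nB > 0 \<Longrightarrow> nC > 0 \<Longrightarrow> bij_betw (split_A nB nC) {..<nA * nB * nC} ({..<nA} \<times> {..<nB * nC})"
  unfolding split_A_def mult.assoc[of nA] by (rule bij_betw_div_mod) simp

lemma bij_betw_split_AB:
  "nC > 0 \<Longrightarrow> bij_betw (split_AB nC) {..<nA * nB * nC} ({..<nA * nB} \<times> {..<nC})"
  unfolding split_AB_def by (rule bij_betw_div_mod)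

lemma bij_betw_split_AC:
  fixes nA nB nC :: nat
  assumes pos: "nB > 0" "nC > 0"
  shows "bij_betw (split_AC nB nC) {..<nA * nB * nC} ({..<nA * nC} \<times> {..<nB})"
proof (rule bij_betw_byWitness[where f' = "\<lambda>(a,b). idx3 nB nC (a div nC) b (a mod nC)"])
  show "\<forall>z\<in>{..<nA * nB * nC}. (case split_AC nB nC z of (a, b) \<Rightarrow> idx3 nB nC (a div nC) b (a mod nC)) = z"
    using pos by (simp add: split_AC_def idx3_dec3)
  show "\<forall>ab\<in>{..<nA * nC} \<times> {..<nB}. split_AC nB nC (case ab of (a, b) \<Rightarrow> idx3 nB nC (a div nC) b (a mod nC)) = ab"
    using pos by (auto simp: split_AC_def dec3_idx3)
  show "split_AC nB nC ` {..<nA * nB * nC} \<subseteq> {..<nA * nC} \<times> {..<nB}"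
  proof
    fix w assume "w \<in> split_AC nB nC ` {..<nA * nB * nC}"
    then obtain z where z: "z < nA * nB * nC" and w: "w = split_AC nB nC z" by auto
    note bd = dec3_bounds[OF z]
    have "z div (nB * nC) * nC + z mod nC < (z div (nB * nC) + 1) * nC" using bd by simp
    also have "\<dots> \<le> nA * nC" using bd by (intro mult_right_mono) auto
    finally show "w \<in> {..<nA * nC} \<times> {..<nB}" unfolding w split_AC_def using bd by simp
  qed
  show "(\<lambda>(a, b). idx3 nB nC (a div nC) b (a mod nC)) ` ({..<nA * nC} \<times> {..<nB}) \<subseteq> {..<nA * nB * nC}"
    using pos by (auto simp: div_less_iff_less_mult intro!: idx3_bound)
qed

context
  fixes nA nB nC :: nat and \<psi> :: "complex vec"
  assumes psi: "\<psi> \<in> carrier_vec (nA * nB * nC)"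
begin

lemma ptrans3_A_eq:
  "ptrans3 nA nB nC True False False (proj \<psi>) = pure_ptrans (nA * nB * nC) (split_A nB nC) (coef_A nB nC \<psi>)"
  by (rule ptrans3_proj_eq_pure_ptrans[OF psi])
     (simp add: split_A_def coef_A_def idx3_def add.assoc div_mod_mult_add_mod)

lemma ptrans3_AB_eq:
  "ptrans3 nA nB nC True True False (proj \<psi>) = pure_ptrans (nA * nB * nC) (split_AB nC) (coef_AB nC \<psi>)"
proof (rule ptrans3_proj_eq_pure_ptrans[OF psi])
  fix z z' :: nat
  have "idx3 nB nC (z' div (nB * nC)) (z' div nC mod nB) (z mod nC)
      = (z' div (nB * nC) * nB + z' div nC mod nB) * nC + z mod nC"
    unfolding idx3_def by (simp add: algebra_simps)
  thus "coef_AB nC \<psi> (fst (split_AB nC z')) (snd (split_AB nC z)) = \<psi> $ idx3 nB nC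
      (if True then z' div (nB * nC) else z div (nB * nC)) (if True then z' div nC mod nB else z div nC mod nB)
      (if False then z' mod nC else z mod nC)"
    unfolding div_mult_add_div_mod by (simp add: split_AB_def coef_AB_def)
qed

lemma ptrans3_AC_eq:
  "ptrans3 nA nB nC True False True (proj \<psi>) = pure_ptrans (nA * nB * nC) (split_AC nB nC) (coef_AC nB nC \<psi>)"
proof (rule ptrans3_proj_eq_pure_ptrans[OF psi])
  fix z z' :: nat assume "z < nA * nB * nC"
  hence "nC > 0" by (auto intro: ccontr)
  thus "coef_AC nB nC \<psi> (fst (split_AC nB nC z')) (snd (split_AC nB nC z)) = \<psi> $ idx3 nB nC
      (if True then z' div (nB * nC) else z div (nB * nC)) (if False then z' div nC mod nB else z div nC mod nB)
      (if True then z' mod nC else z mod nC)"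
    by (simp add: split_AC_def coef_AC_def)
qed

lemma reduced_A_eq_gram: "reduced_A nA nB nC (proj \<psi>) = gram nA (nB * nC) (coef_A nB nC \<psi>)"
proof (rule eq_matI)
  fix i i' assume "i < dim_row (gram nA (nB * nC) (coef_A nB nC \<psi>))" "i' < dim_col (gram nA (nB * nC) (coef_A nB nC \<psi>))"
  hence i: "i < nA" and i': "i' < nA" by (auto simp: gram_def)
  show "reduced_A nA nB nC (proj \<psi>) $$ (i,i') = gram nA (nB * nC) (coef_A nB nC \<psi>) $$ (i,i')"
  proof (cases "nC > 0")
    case True
    have "reduced_A nA nB nC (proj \<psi>) $$ (i,i')
        = (\<Sum>j<nB. \<Sum>k<nC. \<psi> $ idx3 nB nC i j k * cnj (\<psi> $ idx3 nB nC i' j k))"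
      unfolding reduced_A_def using i i' psi by (simp add: proj_def idx3_bound)
    also have "\<dots> = gram nA (nB * nC) (coef_A nB nC \<psi>) $$ (i,i')"
      unfolding gram_def coef_A_def sum_mult_split[OF True] idx3_def
      using i i' by (simp add: add.assoc)
    finally show ?thesis .
  qed (use i i' in \<open>simp add: reduced_A_def gram_def\<close>)
qed (auto simp: reduced_A_def gram_def)

end

section \<open>The purity inequality\<close>

lemma sum_involution:
  assumes "\<And>y. s (s y) = y" "\<And>y. y \<in> A \<Longrightarrow> s y \<in> A"
  shows "(\<Sum>y\<in>A. f (s y)) = (\<Sum>y\<in>A. f y)"
  by (rule sum.reindex_bij_betw, rule bij_betw_byWitness[where f'=s]) (use assms in auto)

type_synonym triple_pair = "(nat \<times> nat \<times> nat) \<times> (nat \<times> nat \<times> nat)"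

text \<open>The overlaps of amp_pair with its versions swapped in B, in C and in both are Tr rho_AC^2,
  Tr rho_AB^2 and Tr rho_A^2, and for a normalised state its overlap with itself is 1. So the
  squared norm of amp_pair - amp_pair o swap_B - amp_pair o swap_C + amp_pair o swap_BC is
  4 (1 - Tr rho_AC^2 - Tr rho_AB^2 + Tr rho_A^2) \<ge> 0.\<close>

context
  fixes nA nB nC :: nat and \<Psi> :: "nat \<Rightarrow> nat \<Rightarrow> nat \<Rightarrow> complex"
begin

definition triples :: "(nat \<times> nat \<times> nat) set" where
  "triples = {..<nA} \<times> {..<nB} \<times> {..<nC}"

definition amp_pair :: "triple_pair \<Rightarrow> complex" where
  "amp_pair y = (case y of ((i,j,k),(i',j',k')) \<Rightarrow> \<Psi> i j k * \<Psi> i' j' k')"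

definition swap_B :: "triple_pair \<Rightarrow> triple_pair" where
  "swap_B y = (case y of ((i,j,k),(i',j',k')) \<Rightarrow> ((i,j',k),(i',j,k')))"

definition swap_C :: "triple_pair \<Rightarrow> triple_pair" where
  "swap_C y = (case y of ((i,j,k),(i',j',k')) \<Rightarrow> ((i,j,k'),(i',j',k)))"

definition swap_BC :: "triple_pair \<Rightarrow> triple_pair" where
  "swap_BC y = swap_B (swap_C y)"

definition overlap :: "(triple_pair \<Rightarrow> triple_pair) \<Rightarrow> complex" where
  "overlap g = (\<Sum>y\<in>triples \<times> triples. amp_pair y * cnj (amp_pair (g y)))"

lemma swap_B_inv [simp]: "swap_B (swap_B y) = y"
  unfolding swap_B_def by (auto split: prod.splits)

lemma swap_C_inv [simp]: "swap_C (swap_C y) = y"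
  unfolding swap_C_def by (auto split: prod.splits)

lemma swap_B_C_comm: "swap_B (swap_C y) = swap_C (swap_B y)"
  unfolding swap_B_def swap_C_def by (auto split: prod.splits)

lemma swap_BC_inv: "swap_BC (swap_BC y) = y"
  unfolding swap_BC_def by (simp add: swap_B_C_comm)

lemma swap_B_in: "y \<in> triples \<times> triples \<Longrightarrow> swap_B y \<in> triples \<times> triples"
  unfolding swap_B_def triples_def by (auto split: prod.splits)

lemma swap_C_in: "y \<in> triples \<times> triples \<Longrightarrow> swap_C y \<in> triples \<times> triples"
  unfolding swap_C_def triples_def by (auto split: prod.splits)

lemma swap_BC_in: "y \<in> triples \<times> triples \<Longrightarrow> swap_BC y \<in> triples \<times> triples"
  unfolding swap_BC_def by (intro swap_B_in swap_C_in)

lemma sum_triples_pairs: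
  "(\<Sum>y\<in>triples \<times> triples. f y)
   = (\<Sum>i<nA. \<Sum>j<nB. \<Sum>k<nC. \<Sum>i'<nA. \<Sum>j'<nB. \<Sum>k'<nC. f ((i,j,k),(i',j',k')))"
  unfolding triples_def by (simp only: sum.cartesian_product')

lemma overlap_involution:
  assumes "\<And>y. s (s y) = y" "\<And>y. y \<in> triples \<times> triples \<Longrightarrow> s y \<in> triples \<times> triples"
  shows "(\<Sum>y\<in>triples \<times> triples. amp_pair (s y) * cnj (amp_pair (h y))) = overlap (\<lambda>y. h (s y))"
  unfolding overlap_def using sum_involution[OF assms, of "\<lambda>y. amp_pair y * cnj (amp_pair (h (s y)))"] assms(1)
  by simp

lemma sum_sq_antisymmetrised:
  "(\<Sum>y\<in>triples \<times> triples. (amp_pair y - amp_pair (swap_B y) - amp_pair (swap_C y) + amp_pair (swap_BC y)) * cnj (amp_pair y - amp_pair (swap_B y) - amp_pair (swap_C y) + amp_pair (swap_BC y)))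
   = 4 * overlap (\<lambda>y. y) - 4 * overlap swap_B - 4 * overlap swap_C + 4 * overlap swap_BC"
proof -
  let ?S = "\<lambda>f g. (\<Sum>y\<in>triples \<times> triples. amp_pair (f y) * cnj (amp_pair (g y)))"
  have e: "(\<Sum>y\<in>triples \<times> triples. (amp_pair y - amp_pair (swap_B y) - amp_pair (swap_C y) + amp_pair (swap_BC y)) * cnj (amp_pair y - amp_pair (swap_B y) - amp_pair (swap_C y) + amp_pair (swap_BC y)))
     = ?S id id - ?S id swap_B - ?S id swap_C + ?S id swap_BC
     - ?S swap_B id + ?S swap_B swap_B + ?S swap_B swap_C - ?S swap_B swap_BC
     - ?S swap_C id + ?S swap_C swap_B + ?S swap_C swap_C - ?S swap_C swap_BC
     + ?S swap_BC id - ?S swap_BC swap_B - ?S swap_BC swap_C + ?S swap_BC swap_BC"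
    by (simp add: algebra_simps sum.distrib sum_subtractf)
  have c1: "swap_B (swap_C y) = swap_BC y" "swap_C (swap_B y) = swap_BC y" "swap_B (swap_BC y) = swap_C y" "swap_C (swap_BC y) = swap_B y" "swap_BC (swap_B y) = swap_C y" "swap_BC (swap_C y) = swap_B y" for y
    unfolding swap_BC_def by (simp_all add: swap_B_C_comm)
  have i: "?S id g = overlap g" for g unfolding overlap_def by simp
  have b: "?S swap_B g = overlap (\<lambda>y. g (swap_B y))" for g using overlap_involution[OF swap_B_inv swap_B_in] by simp
  have c: "?S swap_C g = overlap (\<lambda>y. g (swap_C y))" for g using overlap_involution[OF swap_C_inv swap_C_in] by simp
  have d: "?S swap_BC g = overlap (\<lambda>y. g (swap_BC y))" for g using overlap_involution[OF swap_BC_inv swap_BC_in] by simp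
  show ?thesis unfolding e i b c d by (simp add: c1 swap_BC_inv o_def)
qed

lemma overlap_id: "overlap (\<lambda>y. y) = (\<Sum>i<nA. \<Sum>j<nB. \<Sum>k<nC. \<Psi> i j k * cnj (\<Psi> i j k)) * (\<Sum>i<nA. \<Sum>j<nB. \<Sum>k<nC. \<Psi> i j k * cnj (\<Psi> i j k))"
proof -
  have "overlap (\<lambda>y. y) = (\<Sum>i<nA. \<Sum>j<nB. \<Sum>k<nC. \<Sum>i'<nA. \<Sum>j'<nB. \<Sum>k'<nC.
      \<Psi> i j k * \<Psi> i' j' k' * (cnj (\<Psi> i j k) * cnj (\<Psi> i' j' k')))"
    unfolding overlap_def sum_triples_pairs amp_pair_def by simp
  also have "\<dots> = (\<Sum>i<nA. \<Sum>j<nB. \<Sum>i'<nA. \<Sum>k<nC. \<Sum>j'<nB. \<Sum>k'<nC.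
      \<Psi> i j k * \<Psi> i' j' k' * (cnj (\<Psi> i j k) * cnj (\<Psi> i' j' k')))"
    by (rule sum.cong[OF refl], rule sum.cong[OF refl], rule sum.swap)
  also have "\<dots> = (\<Sum>i<nA. \<Sum>i'<nA. \<Sum>j<nB. \<Sum>k<nC. \<Sum>j'<nB. \<Sum>k'<nC.
      \<Psi> i j k * \<Psi> i' j' k' * (cnj (\<Psi> i j k) * cnj (\<Psi> i' j' k')))"
    by (rule sum.cong[OF refl], rule sum.swap)
  also have "\<dots> = (\<Sum>i<nA. \<Sum>i'<nA. \<Sum>j<nB. \<Sum>j'<nB. \<Sum>k<nC. \<Sum>k'<nC.
      \<Psi> i j k * \<Psi> i' j' k' * (cnj (\<Psi> i j k) * cnj (\<Psi> i' j' k')))"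
    by (rule sum.cong[OF refl], rule sum.cong[OF refl], rule sum.cong[OF refl], rule sum.swap)
  also have "\<dots> = (\<Sum>i<nA. \<Sum>j<nB. \<Sum>k<nC. \<Psi> i j k * cnj (\<Psi> i j k)) * (\<Sum>i<nA. \<Sum>j<nB. \<Sum>k<nC. \<Psi> i j k * cnj (\<Psi> i j k))"
    by (simp only: sum_product, (rule sum.cong[OF refl])+, simp add: ac_simps)
  finally show ?thesis .
qed

lemma overlap_swap_B: "overlap swap_B = (\<Sum>i<nA. \<Sum>k<nC. \<Sum>i'<nA. \<Sum>k'<nC.
    (\<Sum>j<nB. \<Psi> i j k * cnj (\<Psi> i' j k')) * cnj (\<Sum>j<nB. \<Psi> i j k * cnj (\<Psi> i' j k')))"
proof -
  have "overlap swap_B = (\<Sum>i<nA. \<Sum>j<nB. \<Sum>k<nC. \<Sum>i'<nA. \<Sum>j'<nB. \<Sum>k'<nC.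
      \<Psi> i j k * \<Psi> i' j' k' * (cnj (\<Psi> i j' k) * cnj (\<Psi> i' j k')))"
    unfolding overlap_def sum_triples_pairs amp_pair_def swap_B_def by simp
  also have "\<dots> = (\<Sum>i<nA. \<Sum>k<nC. \<Sum>j<nB. \<Sum>i'<nA. \<Sum>j'<nB. \<Sum>k'<nC.
      \<Psi> i j k * \<Psi> i' j' k' * (cnj (\<Psi> i j' k) * cnj (\<Psi> i' j k')))"
    by (rule sum.cong[OF refl], rule sum.swap)
  also have "\<dots> = (\<Sum>i<nA. \<Sum>k<nC. \<Sum>i'<nA. \<Sum>j<nB. \<Sum>j'<nB. \<Sum>k'<nC.
      \<Psi> i j k * \<Psi> i' j' k' * (cnj (\<Psi> i j' k) * cnj (\<Psi> i' j k')))"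
    by (rule sum.cong[OF refl], rule sum.cong[OF refl], rule sum.swap)
  also have "\<dots> = (\<Sum>i<nA. \<Sum>k<nC. \<Sum>i'<nA. \<Sum>j<nB. \<Sum>k'<nC. \<Sum>j'<nB.
      \<Psi> i j k * \<Psi> i' j' k' * (cnj (\<Psi> i j' k) * cnj (\<Psi> i' j k')))"
    by (rule sum.cong[OF refl], rule sum.cong[OF refl], rule sum.cong[OF refl], rule sum.cong[OF refl], rule sum.swap)
  also have "\<dots> = (\<Sum>i<nA. \<Sum>k<nC. \<Sum>i'<nA. \<Sum>k'<nC. \<Sum>j<nB. \<Sum>j'<nB.
      \<Psi> i j k * \<Psi> i' j' k' * (cnj (\<Psi> i j' k) * cnj (\<Psi> i' j k')))"
    by (rule sum.cong[OF refl], rule sum.cong[OF refl], rule sum.cong[OF refl], rule sum.swap)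
  also have "\<dots> = (\<Sum>i<nA. \<Sum>k<nC. \<Sum>i'<nA. \<Sum>k'<nC.
    (\<Sum>j<nB. \<Psi> i j k * cnj (\<Psi> i' j k')) * cnj (\<Sum>j<nB. \<Psi> i j k * cnj (\<Psi> i' j k')))"
    by ((rule sum.cong[OF refl])+, simp only: cnj_sum sum_product, (rule sum.cong[OF refl])+, simp add: ac_simps)
  finally show ?thesis .
qed

lemma overlap_swap_C: "overlap swap_C = (\<Sum>i<nA. \<Sum>j<nB. \<Sum>i'<nA. \<Sum>j'<nB.
    (\<Sum>k<nC. \<Psi> i j k * cnj (\<Psi> i' j' k)) * cnj (\<Sum>k<nC. \<Psi> i j k * cnj (\<Psi> i' j' k)))"
proof -
  have "overlap swap_C = (\<Sum>i<nA. \<Sum>j<nB. \<Sum>k<nC. \<Sum>i'<nA. \<Sum>j'<nB. \<Sum>k'<nC.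
      \<Psi> i j k * \<Psi> i' j' k' * (cnj (\<Psi> i j k') * cnj (\<Psi> i' j' k)))"
    unfolding overlap_def sum_triples_pairs amp_pair_def swap_C_def by simp
  also have "\<dots> = (\<Sum>i<nA. \<Sum>j<nB. \<Sum>i'<nA. \<Sum>k<nC. \<Sum>j'<nB. \<Sum>k'<nC.
      \<Psi> i j k * \<Psi> i' j' k' * (cnj (\<Psi> i j k') * cnj (\<Psi> i' j' k)))"
    by (rule sum.cong[OF refl], rule sum.cong[OF refl], rule sum.swap)
  also have "\<dots> = (\<Sum>i<nA. \<Sum>j<nB. \<Sum>i'<nA. \<Sum>j'<nB. \<Sum>k<nC. \<Sum>k'<nC.
      \<Psi> i j k * \<Psi> i' j' k' * (cnj (\<Psi> i j k') * cnj (\<Psi> i' j' k)))"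
    by (rule sum.cong[OF refl], rule sum.cong[OF refl], rule sum.cong[OF refl], rule sum.swap)
  also have "\<dots> = (\<Sum>i<nA. \<Sum>j<nB. \<Sum>i'<nA. \<Sum>j'<nB.
    (\<Sum>k<nC. \<Psi> i j k * cnj (\<Psi> i' j' k)) * cnj (\<Sum>k<nC. \<Psi> i j k * cnj (\<Psi> i' j' k)))"
    by ((rule sum.cong[OF refl])+, simp only: cnj_sum sum_product, (rule sum.cong[OF refl])+, simp add: ac_simps)
  finally show ?thesis .
qed

lemma overlap_swap_BC: "overlap swap_BC = (\<Sum>i<nA. \<Sum>i'<nA.
    (\<Sum>j<nB. \<Sum>k<nC. \<Psi> i j k * cnj (\<Psi> i' j k)) * cnj (\<Sum>j<nB. \<Sum>k<nC. \<Psi> i j k * cnj (\<Psi> i' j k)))"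
proof -
  have "overlap swap_BC = (\<Sum>i<nA. \<Sum>j<nB. \<Sum>k<nC. \<Sum>i'<nA. \<Sum>j'<nB. \<Sum>k'<nC.
      \<Psi> i j k * \<Psi> i' j' k' * (cnj (\<Psi> i j' k') * cnj (\<Psi> i' j k)))"
    unfolding overlap_def sum_triples_pairs amp_pair_def swap_BC_def swap_B_def swap_C_def by simp
  also have "\<dots> = (\<Sum>i<nA. \<Sum>j<nB. \<Sum>i'<nA. \<Sum>k<nC. \<Sum>j'<nB. \<Sum>k'<nC.
      \<Psi> i j k * \<Psi> i' j' k' * (cnj (\<Psi> i j' k') * cnj (\<Psi> i' j k)))"
    by (rule sum.cong[OF refl], rule sum.cong[OF refl], rule sum.swap)
  also have "\<dots> = (\<Sum>i<nA. \<Sum>i'<nA. \<Sum>j<nB. \<Sum>k<nC. \<Sum>j'<nB. \<Sum>k'<nC.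
      \<Psi> i j k * \<Psi> i' j' k' * (cnj (\<Psi> i j' k') * cnj (\<Psi> i' j k)))"
    by (rule sum.cong[OF refl], rule sum.swap)
  also have "\<dots> = (\<Sum>i<nA. \<Sum>i'<nA. \<Sum>j<nB. \<Sum>j'<nB. \<Sum>k<nC. \<Sum>k'<nC.
      \<Psi> i j k * \<Psi> i' j' k' * (cnj (\<Psi> i j' k') * cnj (\<Psi> i' j k)))"
    by (rule sum.cong[OF refl], rule sum.cong[OF refl], rule sum.cong[OF refl], rule sum.swap)
  also have "\<dots> = (\<Sum>i<nA. \<Sum>i'<nA.
    (\<Sum>j<nB. \<Sum>k<nC. \<Psi> i j k * cnj (\<Psi> i' j k)) * cnj (\<Sum>j<nB. \<Sum>k<nC. \<Psi> i j k * cnj (\<Psi> i' j k)))"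
    by ((rule sum.cong[OF refl])+, simp only: cnj_sum sum_product, (rule sum.cong[OF refl])+, simp add: ac_simps)
  finally show ?thesis .
qed

lemma purity_inequality_amplitudes:
  assumes N1: "(\<Sum>i<nA. \<Sum>j<nB. \<Sum>k<nC. (cmod (\<Psi> i j k))\<^sup>2) = 1"
  shows "(\<Sum>i<nA. \<Sum>k<nC. \<Sum>i'<nA. \<Sum>k'<nC. (cmod (\<Sum>j<nB. \<Psi> i j k * cnj (\<Psi> i' j k')))\<^sup>2)
       + (\<Sum>i<nA. \<Sum>j<nB. \<Sum>i'<nA. \<Sum>j'<nB. (cmod (\<Sum>k<nC. \<Psi> i j k * cnj (\<Psi> i' j' k)))\<^sup>2)
       \<le> 1 + (\<Sum>i<nA. \<Sum>i'<nA. (cmod (\<Sum>j<nB. \<Sum>k<nC. \<Psi> i j k * cnj (\<Psi> i' j k)))\<^sup>2)"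
proof -
  have cv: "\<And>z. z * cnj z = complex_of_real ((cmod z)\<^sup>2)" by (rule complex_norm_square[symmetric])
  let ?T = "\<lambda>y. amp_pair y - amp_pair (swap_B y) - amp_pair (swap_C y) + amp_pair (swap_BC y)"
  have "(\<Sum>y\<in>triples \<times> triples. ?T y * cnj (?T y)) = complex_of_real (\<Sum>y\<in>triples \<times> triples. (cmod (?T y))\<^sup>2)"
    by (simp only: cv of_real_sum)
  hence pos: "Re (\<Sum>y\<in>triples \<times> triples. ?T y * cnj (?T y)) \<ge> 0" by (simp add: sum_nonneg)
  have v0: "overlap (\<lambda>y. y) = 1"
  proof -
    have "(\<Sum>i<nA. \<Sum>j<nB. \<Sum>k<nC. \<Psi> i j k * cnj (\<Psi> i j k)) = complex_of_real (\<Sum>i<nA. \<Sum>j<nB. \<Sum>k<nC. (cmod (\<Psi> i j k))\<^sup>2)"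
      by (simp only: cv of_real_sum)
    thus ?thesis unfolding overlap_id N1 by simp
  qed
  have vB: "overlap swap_B = complex_of_real (\<Sum>i<nA. \<Sum>k<nC. \<Sum>i'<nA. \<Sum>k'<nC. (cmod (\<Sum>j<nB. \<Psi> i j k * cnj (\<Psi> i' j k')))\<^sup>2)"
    unfolding overlap_swap_B by (simp only: cv of_real_sum)
  have vC: "overlap swap_C = complex_of_real (\<Sum>i<nA. \<Sum>j<nB. \<Sum>i'<nA. \<Sum>j'<nB. (cmod (\<Sum>k<nC. \<Psi> i j k * cnj (\<Psi> i' j' k)))\<^sup>2)"
    unfolding overlap_swap_C by (simp only: cv of_real_sum)
  have vBC: "overlap swap_BC = complex_of_real (\<Sum>i<nA. \<Sum>i'<nA. (cmod (\<Sum>j<nB. \<Sum>k<nC. \<Psi> i j k * cnj (\<Psi> i' j k)))\<^sup>2)"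
    unfolding overlap_swap_BC by (simp only: cv of_real_sum)
  from pos show ?thesis unfolding sum_sq_antisymmetrised v0 vB vC vBC by simp
qed

end

lemma purity_inequality:
  fixes nA nB nC :: nat
  assumes pos: "nB > 0" "nC > 0" and n1: "(\<Sum>x < nA * nB * nC. (cmod (\<psi> $ x))\<^sup>2) = 1"
  shows "purity (nA * nC) nB (coef_AC nB nC \<psi>) + purity (nA * nB) nC (coef_AB nC \<psi>)
         \<le> 1 + purity nA (nB * nC) (coef_A nB nC \<psi>)"
proof -
  define \<Psi> where "\<Psi> = (\<lambda>i j k. \<psi> $ idx3 nB nC i j k)"
  have split_BC: "(\<Sum>b<nB * nC. g b) = (\<Sum>j<nB. \<Sum>k<nC. g (j * nC + k))" for g :: "nat \<Rightarrow> 'a::comm_monoid_add"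
    by (rule sum_mult_split[OF pos(2)])
  have "(\<Sum>i<nA. \<Sum>j<nB. \<Sum>k<nC. (cmod (\<Psi> i j k))\<^sup>2) = (\<Sum>x<nA * (nB * nC). (cmod (\<psi> $ x))\<^sup>2)"
    unfolding sum_mult_split[OF mult_pos_pos[OF pos]] split_BC \<Psi>_def idx3_def by (simp add: add.assoc)
  hence "(\<Sum>i<nA. \<Sum>j<nB. \<Sum>k<nC. (cmod (\<Psi> i j k))\<^sup>2) = 1" using n1 by (simp add: mult.assoc)
  note ineq = purity_inequality_amplitudes[OF this]
  have "purity nA (nB * nC) (coef_A nB nC \<psi>)
      = (\<Sum>i<nA. \<Sum>i'<nA. (cmod (\<Sum>j<nB. \<Sum>k<nC. \<Psi> i j k * cnj (\<Psi> i' j k)))\<^sup>2)"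
    unfolding purity_def coef_A_def split_BC \<Psi>_def idx3_def by (simp add: add.assoc)
  moreover have "purity (nA * nB) nC (coef_AB nC \<psi>)
      = (\<Sum>i<nA. \<Sum>j<nB. \<Sum>i'<nA. \<Sum>j'<nB. (cmod (\<Sum>k<nC. \<Psi> i j k * cnj (\<Psi> i' j' k)))\<^sup>2)"
  proof -
    have "(i * nB + j) * nC + k = idx3 nB nC i j k" for i j k unfolding idx3_def by (simp add: algebra_simps)
    thus ?thesis unfolding purity_def coef_AB_def sum_mult_split[OF pos(1)] \<Psi>_def by simp
  qed
  moreover have "purity (nA * nC) nB (coef_AC nB nC \<psi>)
      = (\<Sum>i<nA. \<Sum>k<nC. \<Sum>i'<nA. \<Sum>k'<nC. (cmod (\<Sum>j<nB. \<Psi> i j k * cnj (\<Psi> i' j k')))\<^sup>2)"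
    unfolding purity_def sum_mult_split[OF pos(2)] \<Psi>_def coef_AC_def by (intro sum.cong refl) simp
  ultimately show ?thesis using ineq by simp
qed

theorem lemma1:
  fixes nA nB nC dA :: nat and \<psi> :: "complex vec"
  assumes "\<psi> \<in> carrier_vec (nA * nB * nC)"
    and "(\<Sum>x < nA * nB * nC. (cmod (\<psi> $ x))\<^sup>2) = 1"
    and "dA = vec_space.rank nA (reduced_A nA nB nC (proj \<psi>))"
    and "dA \<ge> 2"
  shows "sqrt (2 / (real dA * (real dA - 1))) * negativity3 nA nB nC True False False (proj \<psi>)
         \<le> negativity3 nA nB nC True False True (proj \<psi>) + negativity3 nA nB nC True True False (proj \<psi>)"
proof -
  note psi = assms(1) and n1 = assms(2)
  have pos: "nB > 0" "nC > 0" using n1 by (auto intro: ccontr)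
  note A = pure_ptrans_negativity_bounds[OF bij_betw_split_A[OF pos] coef_A_split_A n1]
  note AC = pure_ptrans_negativity_bounds[OF bij_betw_split_AC[OF pos] coef_AC_split_AC[OF pos(2)] n1]
  note AB = pure_ptrans_negativity_bounds[OF bij_betw_split_AB[OF pos(2)] coef_AB_split_AB n1]
  show ?thesis
    unfolding negativity3_def ptrans3_A_eq[OF psi] ptrans3_AC_eq[OF psi] ptrans3_AB_eq[OF psi]
    by (rule negativity_combination[OF assms(4) A(3)[folded reduced_A_eq_gram[OF psi], folded assms(3)]
          AC(2) AB(2) A(1) AC(1) AB(1) purity_inequality[OF pos n1]])
qed
end
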